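(* Let $\mathcal R$ be a commutative ring with identity, $\mathcal M,\mathcal N$ modules over $\mathcal R$, $s\in\mathbb N$, $Y\in\mathcal M^{s\times s}$, and let $f_\ell:(\mathcal M^{s\times s})^\ell\to\mathcal N^{s\times s}$, $\ell=0,1,\dots$, be $\ell$-linear mappings ($f_0\in\mathcal N^{s\times s}$) such that for every $S\in\mathcal R^{s\times s}$ and $Z^1,\dots,Z^\ell\in\mathcal M^{s\times s}$: $Sf_0-f_0S=f_1(SY-YS)$; and for $\ell\ge1$: $Sf_\ell(Z^1,\dots,Z^\ell)-f_\ell(SZ^1,Z^2,\dots,Z^\ell)=f_{\ell+1}(SY-YS,Z^1,\dots,Z^\ell)$; for $1\le j\le\ell-1$: $f_\ell(Z^1,\dots,Z^{j-1},Z^jS,Z^{j+1},\dots,Z^\ell)-f_\ell(Z^1,\dots,Z^j,SZ^{j+1},Z^{j+2},\dots,Z^\ell)=f_{\ell+1}(Z^1,\dots,Z^j,SY-YS,Z^{j+1},\dots,Z^\ell)$; $f_\ell(Z^1,\dots,Z^{\ell-1},Z^\ell S)-f_\ell(Z^1,\dots,Z^\ell)S=f_{\ell+1}(Z^1,\dots,Z^\ell,SY-YS)$. Then the function $f$ defined on $\mathrm{Nilp}(\mathcal M,Y)$ by $f(X)=\sum_{\ell=0}^\infty(X-\bigoplus_{\alpha=1}^mY)^{\odot_s\ell}f_\ell$ for $X\in\mathrm{Nilp}(\mathcal M,Y)\cap\mathcal M^{sm\times sm}$ (a sum with finitely many nonzero terms) is a nc function on $\mathrm{Nilp}(\mathcal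 M,Y)$ with values in $\mathcal N_{\mathrm{nc}}$.
   Context: $\mathcal M_{\mathrm{nc}}=\coprod_{n\ge1}\mathcal M^{n\times n}$; matrices over $\mathcal R$ act on matrices over $\mathcal M,\mathcal N$ by matrix multiplication; $X\oplus Y=\begin{bmatrix}X&0\\0&Y\end{bmatrix}$. A nc function on a set $\Omega$ closed under direct sums (with $\Omega_n=\Omega\cap\mathcal M^{n\times n}$) is a map $f$ with $f(\Omega_n)\subseteq\mathcal N^{n\times n}$, $f(X\oplus X')=f(X)\oplus f(X')$, and $f(SXS^{-1})=Sf(X)S^{-1}$ whenever $S\in\mathcal R^{n\times n}$ invertible and $X,SXS^{-1}\in\Omega_n$. For $W\in\mathcal M^{sm\times sm}$ viewed as an $m\times m$ matrix $[W_{ij}]$ of blocks in $\mathcal M^{s\times s}$, $W^{\odot_s\ell}$ is the $m\times m$ matrix over $(\mathcal M^{s\times s})^{\otimes\ell}$ with $(i,k)$ entry $\sum_{j_1,\dots,j_{\ell-1}}W_{ij_1}\otimes\cdots\otimes W_{j_{\ell-1}k}$; $W^{\odot_s\ell}f_\ell\in\mathcal N^{sm\times sm}$ applies $f_\ell$ (as a linear map on the tensor power) entrywise, and $W^{\odot_s0}f_0=\bigoplus_{\alpha=1}^mf_0$. $\mathrm{Nilp}(\mathcal M,Y)=\coprod_m\{X\in\mathcal M^{sm\times sm}:(X-\bigoplus_{\alpha=1}^mY)^{\odot_s\ell}=0\text{ for some }\ell\}$. *)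

theory Defs
  imports Main "HOL.Modules"
begin

definition is_module :: "('r::comm_ring_1 \<Rightarrow> 'a::ab_group_add \<Rightarrow> 'a) \<Rightarrow> bool" where
  "is_module scale \<longleftrightarrow> module scale"

(* Matrices with entries in 'a are functions nat => nat => 'a.
   An n x n matrix is such a function vanishing outside {..<n} x {..<n}. *)
type_synonym 'a fmat = "nat \<Rightarrow> nat \<Rightarrow> 'a"

definition is_mat :: "nat \<Rightarrow> 'a::zero fmat \<Rightarrow> bool" where
  "is_mat n A \<longleftrightarrow> (\<forall>i j. \<not> (i < n \<and> j < n) \<longrightarrow> A i j = 0)"

definition madd :: "'a::plus fmat \<Rightarrow> 'a fmat \<Rightarrow> 'a fmat" where
  "madd A B = (\<lambda>i j. A i j + B i j)"

definition msub :: "'a::minus fmat \<Rightarrow> 'a fmat \<Rightarrow> 'a fmat" where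
  "msub A B = (\<lambda>i j. A i j - B i j)"

definition msc :: "('r \<Rightarrow> 'a \<Rightarrow> 'a) \<Rightarrow> 'r \<Rightarrow> 'a fmat \<Rightarrow> 'a fmat" where
  "msc scale r A = (\<lambda>i j. scale r (A i j))"

definition lmul :: "('r \<Rightarrow> 'a::comm_monoid_add \<Rightarrow> 'a) \<Rightarrow> nat \<Rightarrow> 'r fmat \<Rightarrow> 'a fmat \<Rightarrow> 'a fmat" where
  "lmul scale n S X = (\<lambda>i j. if i < n \<and> j < n then (\<Sum>k<n. scale (S i k) (X k j)) else 0)"

definition rmul :: "('r \<Rightarrow> 'a::comm_monoid_add \<Rightarrow> 'a) \<Rightarrow> nat \<Rightarrow> 'a fmat \<Rightarrow> 'r fmat \<Rightarrow> 'a fmat" where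
  "rmul scale n X S = (\<lambda>i j. if i < n \<and> j < n then (\<Sum>k<n. scale (S k j) (X i k)) else 0)"

definition rmatmul :: "nat \<Rightarrow> 'r::comm_ring_1 fmat \<Rightarrow> 'r fmat \<Rightarrow> 'r fmat" where
  "rmatmul n S T = (\<lambda>i j. if i < n \<and> j < n then (\<Sum>k<n. S i k * T k j) else 0)"

definition idmat :: "nat \<Rightarrow> 'r::comm_ring_1 fmat" where
  "idmat n = (\<lambda>i j. if i < n \<and> j < n \<and> i = j then 1 else 0)"

definition dsum :: "nat \<Rightarrow> nat \<Rightarrow> 'a::zero fmat \<Rightarrow> 'a fmat \<Rightarrow> 'a fmat" where
  "dsum n n' X X' = (\<lambda>i j.
     if i < n \<and> j < n then X i j
     else if n \<le> i \<and> i < n + n' \<and> n \<le> j \<and> j < n + n' then X' (i - n) (j - n)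
     else 0)"

definition block :: "nat \<Rightarrow> 'a::zero fmat \<Rightarrow> nat \<Rightarrow> nat \<Rightarrow> 'a fmat" where
  "block s W \<alpha> \<beta> = (\<lambda>i j. if i < s \<and> j < s then W (\<alpha> * s + i) (\<beta> * s + j) else 0)"

definition assemble :: "nat \<Rightarrow> nat \<Rightarrow> (nat \<Rightarrow> nat \<Rightarrow> 'a::zero fmat) \<Rightarrow> 'a fmat" where
  "assemble s m B = (\<lambda>i j. if i < s * m \<and> j < s * m
                            then B (i div s) (j div s) (i mod s) (j mod s) else 0)"

definition blockdiag :: "nat \<Rightarrow> nat \<Rightarrow> 'a::zero fmat \<Rightarrow> 'a fmat" where
  "blockdiag s m Y = assemble s m (\<lambda>\<alpha> \<beta>. if \<alpha> = \<beta> then Y else (\<lambda>_ _. 0))"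

definition paths :: "nat \<Rightarrow> nat \<Rightarrow> nat \<Rightarrow> nat \<Rightarrow> nat list set" where
  "paths m l i k = {js. length js = Suc l \<and> hd js = i \<and> last js = k \<and> set js \<subseteq> {..<m}}"

definition path_blocks :: "nat \<Rightarrow> 'a::zero fmat \<Rightarrow> nat list \<Rightarrow> 'a fmat list" where
  "path_blocks s W js = map (\<lambda>t. block s W (js ! t) (js ! Suc t)) [0..<length js - 1]"

(* ---- The tensor power (M^{s x s})^{\<otimes> l} over R ----
   Formal R-linear combinations of l-tuples (lists) of s x s matrices are functions
   c :: 'm fmat list => 'r (finitely supported).  The tensor product is the quotient
   of this free module by the submodule generated by the multilinearity relations. *)
definition delta :: "'m fmat list \<Rightarrow> 'm fmat list \<Rightarrow> 'r::comm_ring_1" where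
  "delta xs = (\<lambda>ys. if ys = xs then 1 else 0)"

inductive_set tensor_rel :: "('r::comm_ring_1 \<Rightarrow> 'm::ab_group_add \<Rightarrow> 'm) \<Rightarrow> nat
                              \<Rightarrow> ('m fmat list \<Rightarrow> 'r) set"
  for scale :: "'r::comm_ring_1 \<Rightarrow> 'm::ab_group_add \<Rightarrow> 'm" and s :: nat where
  zero: "(\<lambda>_. 0) \<in> tensor_rel scale s"
| add: "a \<in> tensor_rel scale s \<Longrightarrow> b \<in> tensor_rel scale s \<Longrightarrow> (\<lambda>x. a x + b x) \<in> tensor_rel scale s"
| smult: "a \<in> tensor_rel scale s \<Longrightarrow> (\<lambda>x. r * a x) \<in> tensor_rel scale s"
| gen_add: "\<forall>Z\<in>set As. is_mat s Z \<Longrightarrow> \<forall>Z\<in>set Bs. is_mat s Z \<Longrightarrow> is_mat s A \<Longrightarrow> is_mat s B \<Longrightarrow>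
     (\<lambda>x. delta (As @ [madd A B] @ Bs) x - delta (As @ [A] @ Bs) x - delta (As @ [B] @ Bs) x)
       \<in> tensor_rel scale s"
| gen_smult: "\<forall>Z\<in>set As. is_mat s Z \<Longrightarrow> \<forall>Z\<in>set Bs. is_mat s Z \<Longrightarrow> is_mat s A \<Longrightarrow>
     (\<lambda>x. delta (As @ [msc scale r A] @ Bs) x - r * delta (As @ [A] @ Bs) x)
       \<in> tensor_rel scale s"

(* (i,k) entry of W^{\<odot>_s l}, as a formal combination of elementary tensors:
   sum over j_1..j_{l-1} of W_{i j_1} \<otimes> ... \<otimes> W_{j_{l-1} k} *)
definition odot_entry :: "nat \<Rightarrow> nat \<Rightarrow> 'm::zero fmat \<Rightarrow> nat \<Rightarrow> nat \<Rightarrow> nat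
                          \<Rightarrow> ('m fmat list \<Rightarrow> 'r::comm_ring_1)" where
  "odot_entry s m W l i k = (\<lambda>ys. \<Sum>js\<in>paths m l i k. delta (path_blocks s W js) ys)"

(* W^{\<odot>_s l} = 0 (every entry is zero in the tensor power) *)
definition odot_zero :: "('r::comm_ring_1 \<Rightarrow> 'm::ab_group_add \<Rightarrow> 'm) \<Rightarrow> nat \<Rightarrow> nat
                         \<Rightarrow> 'm fmat \<Rightarrow> nat \<Rightarrow> bool" where
  "odot_zero scale s m W l \<longleftrightarrow>
     (\<forall>i<m. \<forall>k<m. (odot_entry s m W l i k :: 'm fmat list \<Rightarrow> 'r) \<in> tensor_rel scale s)"

(* W^{\<odot>_s l} f_l : apply the (multilinear) f_l entrywise; f_l is f restricted to lists of
   length l.  For l = 0 this is bigoplus_{alpha=1}^m f_0. *)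
definition odot_apply :: "nat \<Rightarrow> nat \<Rightarrow> 'm::zero fmat \<Rightarrow> ('m fmat list \<Rightarrow> 'n::comm_monoid_add fmat)
                          \<Rightarrow> nat \<Rightarrow> 'n fmat" where
  "odot_apply s m W f l = assemble s m (\<lambda>\<alpha> \<beta> a b.
      \<Sum>js\<in>paths m l \<alpha> \<beta>. f (path_blocks s W js) a b)"

definition Nilp :: "('r::comm_ring_1 \<Rightarrow> 'm::ab_group_add \<Rightarrow> 'm) \<Rightarrow> nat \<Rightarrow> 'm fmat
                    \<Rightarrow> (nat \<times> 'm fmat) set" where
  "Nilp scale s Y = {(n, X). \<exists>m\<ge>1. n = s * m \<and> is_mat n X \<and>
        (\<exists>l. odot_zero scale s m (msub X (blockdiag s m Y)) l)}"

definition series_term :: "nat \<Rightarrow> 'm::ab_group_add fmat \<Rightarrow> ('m fmat list \<Rightarrow> 'n::comm_monoid_add fmat)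
                           \<Rightarrow> nat \<Rightarrow> 'm fmat \<Rightarrow> nat \<Rightarrow> 'n fmat" where
  "series_term s Y f n X l = odot_apply s (n div s) (msub X (blockdiag s (n div s) Y)) f l"

definition nc_series :: "nat \<Rightarrow> 'm::ab_group_add fmat \<Rightarrow> ('m fmat list \<Rightarrow> 'n::comm_monoid_add fmat)
                         \<Rightarrow> nat \<Rightarrow> 'm fmat \<Rightarrow> 'n fmat" where
  "nc_series s Y f n X = (\<lambda>a b. \<Sum>l\<in>{l. series_term s Y f n X l \<noteq> (\<lambda>_ _. 0)}.
                                     series_term s Y f n X l a b)"

definition nc_function :: "('r::comm_ring_1 \<Rightarrow> 'm::ab_group_add \<Rightarrow> 'm) \<Rightarrow> ('r \<Rightarrow> 'n::ab_group_add \<Rightarrow> 'n)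
                           \<Rightarrow> (nat \<times> 'm fmat) set \<Rightarrow> (nat \<Rightarrow> 'm fmat \<Rightarrow> 'n fmat) \<Rightarrow> bool" where
  "nc_function scaleM scaleN \<Omega> F \<longleftrightarrow>
     (\<forall>n X. (n, X) \<in> \<Omega> \<longrightarrow> 1 \<le> n \<and> is_mat n X) \<and>
     (\<forall>n X n' X'. (n, X) \<in> \<Omega> \<longrightarrow> (n', X') \<in> \<Omega> \<longrightarrow> (n + n', dsum n n' X X') \<in> \<Omega>) \<and>
     (\<forall>n X. (n, X) \<in> \<Omega> \<longrightarrow> is_mat n (F n X)) \<and>
     (\<forall>n X n' X'. (n, X) \<in> \<Omega> \<longrightarrow> (n', X') \<in> \<Omega> \<longrightarrow>
         F (n + n') (dsum n n' X X') = dsum n n' (F n X) (F n' X')) \<and>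
     (\<forall>n X S T. (n, X) \<in> \<Omega> \<longrightarrow> rmatmul n S T = idmat n \<longrightarrow> rmatmul n T S = idmat n \<longrightarrow>
         (n, rmul scaleM n (lmul scaleM n S X) T) \<in> \<Omega> \<longrightarrow>
         F n (rmul scaleM n (lmul scaleM n S X) T) = rmul scaleN n (lmul scaleN n S (F n X)) T)"

end

theory Submission
  imports Defs "HOL-Library.Function_Algebras"
begin

text \<open>Write \<open>W = X - \<Oplus>Y\<close>, so that \<open>f(X) = \<Sum>\<^sub>l W\<^bsup>\<odot>l\<^esup> f\<^sub>l\<close>. A multilinear map factors through the
  tensor power, so \<open>W\<^bsup>\<odot>L\<^esup> = 0\<close> kills every path sum containing \<open>L\<close> consecutive blocks of \<open>W\<close>;
  in particular the series is finite. For \<open>X \<oplus> X'\<close> the matrix \<open>W\<close> is block diagonal, and once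
  tuples with a zero factor (which vanish in the tensor power) are discarded, the path sums split
  along the two blocks. For a similarity \<open>X' = S X S\<^sup>-\<^sup>1\<close> one has \<open>W' S - S W = S(\<Oplus>Y) - (\<Oplus>Y)S\<close>, and
  the hypotheses on the \<open>f\<^sub>l\<close> say precisely that moving \<open>S\<close> across one slot of \<open>f\<^sub>l\<close> costs a term
  of \<open>f\<^sub>l\<^sub>+\<^sub>1\<close> with this commutator inserted. Hence \<open>S f(X) - f(X') S\<close> telescopes to a sum of words
  containing a long run of \<open>W\<close> or of \<open>W'\<close>, all of which vanish.\<close>

lemma madd_eq: "madd A B = A + B" by (auto simp: madd_def fun_eq_iff)
lemma msub_eq: "msub A B = A - B" by (auto simp: msub_def fun_eq_iff)

lemma sum_fun_apply: "(sum F A) x = (\<Sum>a\<in>A. F a x)"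
  by (induction A rule: infinite_finite_induct) auto

definition is_mat_list :: "nat \<Rightarrow> 'a::zero fmat list \<Rightarrow> bool" where
  "is_mat_list s ys \<longleftrightarrow> (\<forall>Z\<in>set ys. is_mat s Z)"

definition is_block_list :: "nat \<Rightarrow> (nat \<Rightarrow> nat \<Rightarrow> 'a::zero fmat) list \<Rightarrow> bool" where
  "is_block_list s Bs \<longleftrightarrow> (\<forall>B\<in>set Bs. \<forall>a b. is_mat s (B a b))"

lemma is_mat_list_simps[simp]: "is_mat_list s [] " "is_mat_list s (x # xs) \<longleftrightarrow> is_mat s x \<and> is_mat_list s xs"
  "is_mat_list s (xs @ ys) \<longleftrightarrow> is_mat_list s xs \<and> is_mat_list s ys"
  by (auto simp: is_mat_list_def)

lemma is_block_list_simps[simp]: "is_block_list s [] " "is_block_list s (x # xs) \<longleftrightarrow> (\<forall>a b. is_mat s (x a b)) \<and> is_block_list s xs"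
  "is_block_list s (xs @ ys) \<longleftrightarrow> is_block_list s xs \<and> is_block_list s ys"
  "is_block_list s (replicate n x) \<longleftrightarrow> n = 0 \<or> (\<forall>a b. is_mat s (x a b))"
  by (auto simp: is_block_list_def)

lemma is_mat_block[simp]: "is_mat s (block s W a b)"
  by (auto simp: is_mat_def block_def)

lemma is_mat_zero[simp]: "is_mat n 0" by (simp add: is_mat_def)
lemma is_mat_add[simp]: "is_mat n A \<Longrightarrow> is_mat n B \<Longrightarrow> is_mat n (A + B)" for A :: "'a::monoid_add fmat" by (simp add: is_mat_def)
lemma is_mat_diff[simp]: "is_mat n A \<Longrightarrow> is_mat n B \<Longrightarrow> is_mat n (A - B)" for A :: "'a::ab_group_add fmat" by (simp add: is_mat_def)
lemma is_mat_sum: fixes F :: "_ \<Rightarrow> 'a::comm_monoid_add fmat" shows "(\<And>i. i \<in> I \<Longrightarrow> is_mat n (F i)) \<Longrightarrow> is_mat n (sum F I)"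
  by (induction I rule: infinite_finite_induct) auto

text \<open>\<open>path_sum m [B\<^sub>1, \<dots>, B\<^sub>l] g \<alpha> \<beta>\<close> is the sum over index paths \<open>\<alpha> = j\<^sub>0, \<dots>, j\<^sub>l = \<beta>\<close> with
  all \<open>j\<^sub>t < m\<close> of \<open>g [B\<^sub>1 j\<^sub>0 j\<^sub>1, \<dots>, B\<^sub>l j\<^sub>l\<^sub>-\<^sub>1 j\<^sub>l]\<close>. For \<open>B\<^sub>t = block s W\<close> this is the
  \<open>(\<alpha>, \<beta>)\<close> block of \<open>W\<^bsup>\<odot>l\<^esup> g\<close>; varying the \<open>B\<^sub>t\<close> accommodates words in several matrices.\<close>

primrec path_sum :: "nat \<Rightarrow> (nat \<Rightarrow> nat \<Rightarrow> 'm fmat) list \<Rightarrow> ('m fmat list \<Rightarrow> 'v::comm_monoid_add)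
   \<Rightarrow> nat \<Rightarrow> nat \<Rightarrow> 'v" where
  "path_sum m [] g \<alpha> \<beta> = (if \<alpha> = \<beta> then g [] else 0)"
| "path_sum m (B # Bs) g \<alpha> \<beta> = (\<Sum>q<m. path_sum m Bs (\<lambda>ys. g (B \<alpha> q # ys)) q \<beta>)"

lemma path_sum_add: "path_sum m Bs (\<lambda>ys. g ys + h ys) \<alpha> \<beta> = path_sum m Bs g \<alpha> \<beta> + path_sum m Bs h \<alpha> \<beta>"
  by (induction Bs arbitrary: g h \<alpha>) (auto simp: sum.distrib)

lemma path_sum_zero: "path_sum m Bs (\<lambda>ys. 0) \<alpha> \<beta> = 0"
  by (induction Bs arbitrary: \<alpha>) auto

lemma path_sum_diff: "path_sum m Bs (\<lambda>ys. g ys - h ys) \<alpha> \<beta> = path_sum m Bs g \<alpha> \<beta> - (path_sum m Bs h \<alpha> \<beta> :: 'v::ab_group_add)"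
  by (induction Bs arbitrary: g h \<alpha>) (auto simp: sum_subtractf)

lemma path_sum_sum: "path_sum m Bs (\<lambda>ys. \<Sum>i\<in>I. g i ys) \<alpha> \<beta> = (\<Sum>i\<in>I. path_sum m Bs (g i) \<alpha> \<beta>)"
proof (induction Bs arbitrary: g \<alpha>)
  case Nil then show ?case by auto
next
  case (Cons B Bs) then show ?case by (simp add: sum.swap[of _ I])
qed

lemma path_sum_cong:
  assumes "is_block_list s Bs" "\<And>ys. is_mat_list s ys \<Longrightarrow> g ys = h ys"
  shows "path_sum m Bs g \<alpha> \<beta> = path_sum m Bs h \<alpha> \<beta>"
  using assms
proof (induction Bs arbitrary: g h \<alpha>)
  case Nil then show ?case by auto
next
  case (Cons B Bs)
  show ?case using Cons.prems by (auto intro!: sum.cong Cons.IH)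
qed

lemma sum_closed_additive:
  assumes "0 \<in> A" "\<And>x y. x \<in> A \<Longrightarrow> y \<in> A \<Longrightarrow> x + y \<in> A"
    "\<And>x y. x \<in> A \<Longrightarrow> y \<in> A \<Longrightarrow> \<Phi> (x + y) = \<Phi> x + \<Phi> y" "\<Phi> 0 = 0"
    "\<And>i. i \<in> I \<Longrightarrow> F i \<in> A"
  shows "sum F I \<in> A \<and> \<Phi> (sum F I) = (\<Sum>i\<in>I. \<Phi> (F i))"
  using assms(5)
  by (induction I rule: infinite_finite_induct) (auto simp: assms(1-4))

lemma path_sum_additive_on:
  assumes "0 \<in> A" "\<And>x y. x \<in> A \<Longrightarrow> y \<in> A \<Longrightarrow> x + y \<in> A"
    "\<And>x y. x \<in> A \<Longrightarrow> y \<in> A \<Longrightarrow> \<Phi> (x + y) = \<Phi> x + \<Phi> y" "\<Phi> 0 = 0"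
    "is_block_list s Bs" "\<And>ys. is_mat_list s ys \<Longrightarrow> g ys \<in> A"
  shows "path_sum m Bs g \<alpha> \<beta> \<in> A \<and> \<Phi> (path_sum m Bs g \<alpha> \<beta>) = path_sum m Bs (\<lambda>ys. \<Phi> (g ys)) \<alpha> \<beta>"
  using assms(5,6)
proof (induction Bs arbitrary: g \<alpha>)
  case Nil then show ?case using assms(1,4) by auto
next
  case (Cons B Bs)
  have IH: "path_sum m Bs (\<lambda>ys. g (B \<alpha> q # ys)) q \<beta> \<in> A \<and>
     \<Phi> (path_sum m Bs (\<lambda>ys. g (B \<alpha> q # ys)) q \<beta>) = path_sum m Bs (\<lambda>ys. \<Phi> (g (B \<alpha> q # ys))) q \<beta>" for q
    using Cons by (intro Cons.IH) auto
  show ?case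
    using sum_closed_additive[OF assms(1-4), of "{..<m}" "\<lambda>q. path_sum m Bs (\<lambda>ys. g (B \<alpha> q # ys)) q \<beta>"] IH
    by auto
qed

lemma path_sum_additive:
  assumes "\<And>x y. \<Phi> (x + y) = \<Phi> x + \<Phi> y" "\<Phi> 0 = 0"
  shows "\<Phi> (path_sum m Bs g \<alpha> \<beta>) = path_sum m Bs (\<lambda>ys. \<Phi> (g ys)) \<alpha> \<beta>"
proof (induction Bs arbitrary: g \<alpha>)
  case Nil then show ?case using assms by auto
next
  case (Cons B Bs)
  have "\<Phi> (sum F I) = (\<Sum>i\<in>I. \<Phi> (F i))" for F and I :: "nat set"
    using sum_closed_additive[of UNIV \<Phi> I F] assms by auto
  then show ?case using Cons by simp
qed

lemma path_sum_closed:
  assumes "0 \<in> A" "\<And>x y. x \<in> A \<Longrightarrow> y \<in> A \<Longrightarrow> x + y \<in> A"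
    "is_block_list s Bs" "\<And>ys. is_mat_list s ys \<Longrightarrow> g ys \<in> A"
  shows "path_sum m Bs g \<alpha> \<beta> \<in> A"
  using path_sum_additive_on[of A id s Bs g m \<alpha> \<beta>] assms by auto

lemma path_sum_append:
  assumes "\<alpha> < m"
  shows "path_sum m (Pre @ Suf) g \<alpha> \<beta> = (\<Sum>q<m. path_sum m Pre (\<lambda>ys. path_sum m Suf (\<lambda>zs. g (ys @ zs)) q \<beta>) \<alpha> q)"
  using assms
proof (induction Pre arbitrary: g \<alpha>)
  case Nil
  have "(\<Sum>q<m. path_sum m [] (\<lambda>ys. path_sum m Suf (\<lambda>zs. g (ys @ zs)) q \<beta>) \<alpha> q)
     = (\<Sum>q<m. (if \<alpha> = q then path_sum m Suf g q \<beta> else 0))"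
    by (intro sum.cong) auto
  also have "\<dots> = path_sum m Suf g \<alpha> \<beta>"
    using Nil.prems sum.delta'[of "{..<m}" \<alpha> "\<lambda>q. path_sum m Suf g q \<beta>"] by (simp only: lessThan_iff if_True finite_lessThan)
  finally show ?case by (metis append_Nil)
next
  case (Cons B Pre)
  have "path_sum m ((B # Pre) @ Suf) g \<alpha> \<beta> = (\<Sum>r<m. path_sum m (Pre @ Suf) (\<lambda>ys. g (B \<alpha> r # ys)) r \<beta>)" by simp
  also have "\<dots> = (\<Sum>r<m. \<Sum>q<m. path_sum m Pre (\<lambda>ys. path_sum m Suf (\<lambda>zs. g (B \<alpha> r # ys @ zs)) q \<beta>) r q)"
    by (intro sum.cong refl Cons.IH) auto
  also have "\<dots> = (\<Sum>q<m. path_sum m (B # Pre) (\<lambda>ys. path_sum m Suf (\<lambda>zs. g (ys @ zs)) q \<beta>) \<alpha> q)"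
    by (simp; rule sum.swap)
  finally show ?case .
qed

definition multilinear :: "('r::comm_ring_1 \<Rightarrow> 'm::ab_group_add \<Rightarrow> 'm) \<Rightarrow> ('r \<Rightarrow> 'v::ab_group_add \<Rightarrow> 'v)
   \<Rightarrow> nat \<Rightarrow> ('m fmat list \<Rightarrow> 'v) \<Rightarrow> bool" where
  "multilinear scM scV s g \<longleftrightarrow>
   (\<forall>As Bs A B. is_mat_list s As \<longrightarrow> is_mat_list s Bs \<longrightarrow> is_mat s A \<longrightarrow> is_mat s B \<longrightarrow>
       g (As @ [A + B] @ Bs) = g (As @ [A] @ Bs) + g (As @ [B] @ Bs)) \<and>
   (\<forall>As Bs A r. is_mat_list s As \<longrightarrow> is_mat_list s Bs \<longrightarrow> is_mat s A \<longrightarrow>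
       g (As @ [msc scM r A] @ Bs) = scV r (g (As @ [A] @ Bs)))"

lemma multilinear_add_slot: "multilinear scM scV s g \<Longrightarrow> is_mat_list s As \<Longrightarrow> is_mat_list s Bs \<Longrightarrow> is_mat s A \<Longrightarrow> is_mat s B \<Longrightarrow>
       g (As @ [A + B] @ Bs) = g (As @ [A] @ Bs) + g (As @ [B] @ Bs)"
  unfolding multilinear_def by blast

lemma multilinear_scale_slot: "multilinear scM scV s g \<Longrightarrow> is_mat_list s As \<Longrightarrow> is_mat_list s Bs \<Longrightarrow> is_mat s A \<Longrightarrow>
       g (As @ [msc scM r A] @ Bs) = scV r (g (As @ [A] @ Bs))"
  unfolding multilinear_def by blast

lemma multilinear_zero_slot: "multilinear scM scV s g \<Longrightarrow> is_mat_list s As \<Longrightarrow> is_mat_list s Bs \<Longrightarrow> g (As @ [0] @ Bs) = 0"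
  using multilinear_add_slot[of scM scV s g As Bs 0 0] by simp

lemma multilinear_diff_slot: "multilinear scM scV s g \<Longrightarrow> is_mat_list s As \<Longrightarrow> is_mat_list s Bs \<Longrightarrow> is_mat s A \<Longrightarrow> is_mat s B \<Longrightarrow>
       g (As @ [A - B] @ Bs) = g (As @ [A] @ Bs) - g (As @ [B] @ Bs)"
  using multilinear_add_slot[of scM scV s g As Bs "A - B" B] by (simp add: eq_diff_eq)

lemma multilinear_sum_slot:
  assumes "multilinear scM scV s g" "is_mat_list s As" "is_mat_list s Bs" "\<And>i. i \<in> I \<Longrightarrow> is_mat s (F i)"
  shows "g (As @ [sum F I] @ Bs) = (\<Sum>i\<in>I. g (As @ [F i] @ Bs))"
  using assms(4)
proof (induction I rule: infinite_finite_induct)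
  case (infinite A) then show ?case using multilinear_zero_slot[OF assms(1-3)] by (simp add: zero_fun_def)
next
  case empty then show ?case using multilinear_zero_slot[OF assms(1-3)] by (simp add: zero_fun_def)
next
  case (insert x F')
  have "g (As @ [sum F (insert x F')] @ Bs) = g (As @ [F x + sum F F'] @ Bs)"
    by (simp only: sum.insert[OF insert(1,2)])
  also have "\<dots> = g (As @ [F x] @ Bs) + g (As @ [sum F F'] @ Bs)"
    by (rule multilinear_add_slot[OF assms(1-3)]) (use insert in \<open>auto intro: is_mat_sum\<close>)
  also have "\<dots> = g (As @ [F x] @ Bs) + (\<Sum>i\<in>F'. g (As @ [F i] @ Bs))"
    using insert.IH insert.prems by simp
  also have "\<dots> = (\<Sum>i\<in>insert x F'. g (As @ [F i] @ Bs))"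
    by (simp only: sum.insert[OF insert(1,2)])
  finally show ?case .
qed

lemma multilinear_fix_prefix: "multilinear scM scV s g \<Longrightarrow> is_mat_list s ys \<Longrightarrow> multilinear scM scV s (\<lambda>zs. g (ys @ zs))"
  unfolding multilinear_def
  apply (intro conjI allI impI)
  subgoal for As Bs A B by (drule conjunct1, drule spec[of _ "ys @ As"]) auto
  subgoal for As Bs A r by (drule conjunct2, drule spec[of _ "ys @ As"]) auto
  done

lemma multilinear_fix_suffix: "multilinear scM scV s g \<Longrightarrow> is_mat_list s ys \<Longrightarrow> multilinear scM scV s (\<lambda>zs. g (zs @ ys))"
  unfolding multilinear_def
  apply (intro conjI allI impI)
  subgoal for As Bs A B by (drule conjunct1, drule spec[of _ As], drule spec[of _ "Bs @ ys"]) auto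
  subgoal for As Bs A r by (drule conjunct2, drule spec[of _ As], drule spec[of _ "Bs @ ys"]) auto
  done

lemma multilinear_sum:
  assumes "module scV" "\<And>i. i \<in> I \<Longrightarrow> multilinear scM scV s (g i)"
  shows "multilinear scM scV s (\<lambda>zs. \<Sum>i\<in>I. g i zs)"
proof -
  interpret V: module scV by fact
  show ?thesis using assms(2) unfolding multilinear_def
    by (auto simp: sum.distrib V.scale_sum_right)
qed

lemma multilinear_zero: "module scV \<Longrightarrow> multilinear scM scV s (\<lambda>zs. 0)"
  unfolding multilinear_def by (simp add: module.scale_zero_right)

lemma multilinear_path_sum:
  assumes "module scV" "multilinear scM scV s g" "is_block_list s Bs"
  shows "multilinear scM scV s (\<lambda>zs. path_sum m Bs (\<lambda>ws. g (zs @ ws)) r \<beta>)"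
  using assms(2,3)
proof (induction Bs arbitrary: g r)
  case Nil
  then show ?case using multilinear_zero[OF assms(1)] by (cases "r = \<beta>") auto
next
  case (Cons B Bs)
  have "multilinear scM scV s (\<lambda>zs. path_sum m Bs (\<lambda>ws. g ((zs @ [B r q]) @ ws)) q \<beta>)" for q
    using multilinear_fix_suffix[OF Cons.IH[OF Cons.prems(1)], of "[B r q]" q] Cons.prems by auto
  then have "multilinear scM scV s (\<lambda>zs. \<Sum>q<m. path_sum m Bs (\<lambda>ws. g ((zs @ [B r q]) @ ws)) q \<beta>)"
    by (intro multilinear_sum[OF assms(1)])
  then show ?case by simp
qed

lemma module_msc: "module sc \<Longrightarrow> module (msc sc)"
  unfolding msc_def
  by unfold_locales (auto simp: fun_eq_iff module.scale_right_distrib module.scale_left_distrib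
     module.scale_scale module.scale_one)

text \<open>Only meaningful for finitely supported \<open>c\<close>:
  an infinite support turns the sum into \<open>0\<close>, whence the finiteness hypotheses below.\<close>

definition tensor_eval ::
    "('r::comm_ring_1 \<Rightarrow> 'v::ab_group_add \<Rightarrow> 'v) \<Rightarrow> ('m fmat list \<Rightarrow> 'v) \<Rightarrow> ('m fmat list \<Rightarrow> 'r) \<Rightarrow> 'v" where
  "tensor_eval scV g c = (\<Sum>ys\<in>{ys. c ys \<noteq> 0}. scV (c ys) (g ys))"

lemma tensor_eval_superset:
  assumes "module scV" "finite A" "{ys. c ys \<noteq> 0} \<subseteq> A"
  shows "tensor_eval scV g c = (\<Sum>ys\<in>A. scV (c ys) (g ys))"
  unfolding tensor_eval_def using assms
  by (intro sum.mono_neutral_left) (auto simp: module.scale_zero_left)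

lemma tensor_eval_add:
  assumes "module scV" "finite {ys. c ys \<noteq> 0}" "finite {ys. d ys \<noteq> 0}"
  shows "tensor_eval scV g (\<lambda>x. c x + d x) = tensor_eval scV g c + tensor_eval scV g d"
proof -
  let ?A = "{ys. c ys \<noteq> 0} \<union> {ys. d ys \<noteq> 0}"
  have "tensor_eval scV g (\<lambda>x. c x + d x) = (\<Sum>ys\<in>?A. scV (c ys + d ys) (g ys))"
    by (rule tensor_eval_superset) (use assms in auto)
  also have "\<dots> = (\<Sum>ys\<in>?A. scV (c ys) (g ys)) + (\<Sum>ys\<in>?A. scV (d ys) (g ys))"
    by (simp add: module.scale_left_distrib[OF assms(1)] sum.distrib)
  also have "\<dots> = tensor_eval scV g c + tensor_eval scV g d"
    using tensor_eval_superset[OF assms(1), of ?A c g] tensor_eval_superset[OF assms(1), of ?A d g] assms by auto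
  finally show ?thesis .
qed

lemma tensor_eval_diff:
  assumes "module scV" "finite {ys. c ys \<noteq> 0}" "finite {ys. d ys \<noteq> 0}"
  shows "tensor_eval scV g (\<lambda>x. c x - d x) = tensor_eval scV g c - tensor_eval scV g d"
proof -
  let ?A = "{ys. c ys \<noteq> 0} \<union> {ys. d ys \<noteq> 0}"
  have "tensor_eval scV g (\<lambda>x. c x - d x) = (\<Sum>ys\<in>?A. scV (c ys - d ys) (g ys))"
    by (rule tensor_eval_superset) (use assms in auto)
  also have "\<dots> = (\<Sum>ys\<in>?A. scV (c ys) (g ys)) - (\<Sum>ys\<in>?A. scV (d ys) (g ys))"
    by (simp add: module.scale_left_diff_distrib[OF assms(1)] sum_subtractf)
  also have "\<dots> = tensor_eval scV g c - tensor_eval scV g d"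
    using tensor_eval_superset[OF assms(1), of ?A c g] tensor_eval_superset[OF assms(1), of ?A d g] assms by auto
  finally show ?thesis .
qed

lemma tensor_eval_smult:
  assumes "module scV" "finite {ys. c ys \<noteq> 0}"
  shows "tensor_eval scV g (\<lambda>x. r * c x) = scV r (tensor_eval scV g c)"
proof -
  have "tensor_eval scV g (\<lambda>x. r * c x) = (\<Sum>ys\<in>{ys. c ys \<noteq> 0}. scV (r * c ys) (g ys))"
    by (rule tensor_eval_superset) (use assms in auto)
  also have "\<dots> = scV r (tensor_eval scV g c)"
    by (simp add: tensor_eval_def module.scale_sum_right[OF assms(1)] module.scale_scale[OF assms(1)])
  finally show ?thesis .
qed

lemma supp_delta: "{ys. delta xs ys \<noteq> (0::'r::comm_ring_1)} = {xs}"
  by (auto simp: delta_def)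

lemma tensor_eval_delta: "module scV \<Longrightarrow> tensor_eval scV g (delta xs) = g xs"
  unfolding tensor_eval_def supp_delta by (simp add: delta_def module.scale_one)

lemma finite_support_diff:
  "finite {x. c x \<noteq> 0} \<Longrightarrow> finite {x. d x \<noteq> 0} \<Longrightarrow> finite {x. c x - d x \<noteq> (0::'a::ab_group_add)}"
  by (rule finite_subset[of _ "{x. c x \<noteq> 0} \<union> {x. d x \<noteq> 0}"]) auto

lemma finite_support_delta: "finite {ys. delta xs ys \<noteq> (0::'r::comm_ring_1)}"
  by (simp add: supp_delta)

lemma tensor_rel_finite_support:
  fixes c :: "'m::ab_group_add fmat list \<Rightarrow> 'r::comm_ring_1"
  assumes "c \<in> tensor_rel sc s"
  shows "finite {ys. c ys \<noteq> 0}"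
  using assms
proof (induction rule: tensor_rel.induct)
  case (add a b)
  then show ?case by (auto intro: finite_subset[of _ "{x. a x \<noteq> 0} \<union> {x. b x \<noteq> 0}"])
next
  case (smult a r)
  then show ?case by (auto intro: finite_subset[of _ "{x. a x \<noteq> 0}"])
next
  case (gen_add As Bs A B)
  show ?case
    by (rule finite_subset[of _ "{As @ [madd A B] @ Bs, As @ [A] @ Bs, As @ [B] @ Bs}"]) (auto simp: delta_def)
next
  case (gen_smult As Bs A r)
  show ?case
    by (rule finite_subset[of _ "{As @ [msc sc r A] @ Bs, As @ [A] @ Bs}"]) (auto simp: delta_def)
qed simp

lemma tensor_rel_eval_zero:
  fixes c :: "'m::ab_group_add fmat list \<Rightarrow> 'r::comm_ring_1"
  assumes V: "module scV" and g: "multilinear scM scV s g" and c: "c \<in> tensor_rel scM s"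
  shows "tensor_eval scV g c = 0"
  using c
proof (induction rule: tensor_rel.induct)
  case zero
  then show ?case by (simp add: tensor_eval_def)
next
  case (add a b)
  then show ?case by (simp add: tensor_eval_add[OF V] tensor_rel_finite_support)
next
  case (smult a r)
  then show ?case by (simp add: tensor_eval_smult[OF V] tensor_rel_finite_support module.scale_zero_right[OF V])
next
  case (gen_add As Bs A B)
  let ?d = "\<lambda>xs. delta xs :: _ \<Rightarrow> 'r"
  have "tensor_eval scV g (\<lambda>x. ?d (As @ [madd A B] @ Bs) x - ?d (As @ [A] @ Bs) x - ?d (As @ [B] @ Bs) x)
      = tensor_eval scV g (\<lambda>x. ?d (As @ [madd A B] @ Bs) x - ?d (As @ [A] @ Bs) x) - g (As @ [B] @ Bs)"
    by (subst tensor_eval_diff[OF V finite_support_diff[OF finite_support_delta finite_support_delta] finite_support_delta])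
       (simp add: tensor_eval_delta[OF V])
  also have "\<dots> = g (As @ [A + B] @ Bs) - g (As @ [A] @ Bs) - g (As @ [B] @ Bs)"
    by (simp add: tensor_eval_diff[OF V] tensor_eval_delta[OF V] finite_support_delta madd_eq)
  also have "\<dots> = 0"
    using multilinear_add_slot[OF g, of As Bs A B] gen_add by (simp add: is_mat_list_def)
  finally show ?case .
next
  case (gen_smult As Bs A r)
  have fin: "finite {x. r * delta (As @ [A] @ Bs) x \<noteq> (0::'r)}"
    by (rule finite_subset[OF _ finite_support_delta[of "As @ [A] @ Bs"]]) (auto simp: delta_def)
  have "tensor_eval scV g (\<lambda>x. delta (As @ [msc scM r A] @ Bs) x - r * delta (As @ [A] @ Bs) x)
      = g (As @ [msc scM r A] @ Bs) - scV r (g (As @ [A] @ Bs))"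
    by (subst tensor_eval_diff[OF V finite_support_delta fin])
       (simp add: tensor_eval_smult[OF V finite_support_delta] tensor_eval_delta[OF V])
  also have "\<dots> = 0"
    using multilinear_scale_slot[OF g, of As Bs A r] gen_smult by (simp add: is_mat_list_def)
  finally show ?case .
qed

lemma paths_0: "paths m 0 \<alpha> \<beta> = (if \<alpha> = \<beta> \<and> \<alpha> < m then {[\<alpha>]} else {})"
  by (auto simp: paths_def length_Suc_conv)

lemma paths_Suc:
  assumes "\<alpha> < m"
  shows "paths m (Suc l) \<alpha> \<beta> = (\<Union>q\<in>{..<m}. (\<lambda>js. \<alpha> # js) ` paths m l q \<beta>)"
proof (intro equalityI subsetI)
  fix js assume "js \<in> paths m (Suc l) \<alpha> \<beta>"
  then obtain js' where js: "js = \<alpha> # js'" "length js' = Suc l" "last js' = \<beta>" "set js' \<subseteq> {..<m}"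
    by (auto simp: paths_def length_Suc_conv)
  then have "hd js' < m" by (cases js') auto
  then show "js \<in> (\<Union>q\<in>{..<m}. (\<lambda>js. \<alpha> # js) ` paths m l q \<beta>)"
    using js by (auto simp: paths_def intro!: bexI[of _ "hd js'"])
next
  fix js assume "js \<in> (\<Union>q\<in>{..<m}. (\<lambda>js. \<alpha> # js) ` paths m l q \<beta>)"
  then show "js \<in> paths m (Suc l) \<alpha> \<beta>"
    using assms by (auto simp: paths_def)
qed

lemma finite_paths: "finite (paths m l \<alpha> \<beta>)"
  by (rule finite_subset[of _ "{js. set js \<subseteq> {..<m} \<and> length js = Suc l}"])
     (auto simp: paths_def intro: finite_lists_length_eq)

lemma path_blocks_single: "path_blocks s W [\<alpha>] = []"
  by (simp add: path_blocks_def)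

lemma path_blocks_Cons:
  assumes "js \<noteq> []"
  shows "path_blocks s W (\<alpha> # js) = block s W \<alpha> (hd js) # path_blocks s W js"
proof -
  obtain k where k: "length js = Suc k" using assms by (cases js) auto
  have "[0..<Suc k] = 0 # map Suc [0..<k]" by (simp add: upt_conv_Cons map_Suc_upt)
  then show ?thesis using k assms
    by (simp add: path_blocks_def hd_conv_nth)
qed

lemma sum_paths_eq_path_sum:
  assumes "\<alpha> < m"
  shows "(\<Sum>js\<in>paths m l \<alpha> \<beta>. g (path_blocks s W js)) = path_sum m (replicate l (block s W)) g \<alpha> \<beta>"
  using assms
proof (induction l arbitrary: \<alpha> g)
  case 0 then show ?case by (simp add: paths_0 path_blocks_single)
next
  case (Suc l)
  have inner: "(\<Sum>js\<in>(\<lambda>js. \<alpha> # js) ` paths m l q \<beta>. g (path_blocks s W js))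
       = (\<Sum>js\<in>paths m l q \<beta>. g (block s W \<alpha> q # path_blocks s W js))" for q
  proof -
    have "(\<Sum>js\<in>(\<lambda>js. \<alpha> # js) ` paths m l q \<beta>. g (path_blocks s W js))
       = (\<Sum>js\<in>paths m l q \<beta>. g (path_blocks s W (\<alpha> # js)))"
      by (subst sum.reindex) (auto simp: inj_on_def)
    also have "\<dots> = (\<Sum>js\<in>paths m l q \<beta>. g (block s W \<alpha> q # path_blocks s W js))"
    proof (intro sum.cong refl)
      fix js assume "js \<in> paths m l q \<beta>"
      then have "js \<noteq> []" "hd js = q" by (auto simp: paths_def)
      then show "g (path_blocks s W (\<alpha> # js)) = g (block s W \<alpha> q # path_blocks s W js)"
        by (simp add: path_blocks_Cons)
    qed
    finally show ?thesis .
  qed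
  have dis: "(\<lambda>js. \<alpha> # js) ` paths m l q \<beta> \<inter> (\<lambda>js. \<alpha> # js) ` paths m l q' \<beta> = {}" if "q \<noteq> q'" for q q'
  proof -
    have "hd js = q" if "js \<in> paths m l q \<beta>" for js q using that by (auto simp: paths_def)
    then show ?thesis using \<open>q \<noteq> q'\<close> by blast
  qed
  have "(\<Sum>js\<in>paths m (Suc l) \<alpha> \<beta>. g (path_blocks s W js))
     = (\<Sum>q<m. \<Sum>js\<in>(\<lambda>js. \<alpha> # js) ` paths m l q \<beta>. g (path_blocks s W js))"
    unfolding paths_Suc[OF Suc.prems]
    by (rule sum.UNION_disjoint) (auto simp: finite_paths dis)
  also have "\<dots> = (\<Sum>q<m. \<Sum>js\<in>paths m l q \<beta>. g (block s W \<alpha> q # path_blocks s W js))"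
    by (simp add: inner)
  also have "\<dots> = (\<Sum>q<m. path_sum m (replicate l (block s W)) (\<lambda>ys. g (block s W \<alpha> q # ys)) q \<beta>)"
    by (intro sum.cong refl Suc.IH) auto
  finally show ?case by simp
qed

lemma odot_entry_eq_path_sum:
  assumes "\<alpha> < m"
  shows "(odot_entry s m W l \<alpha> \<beta> :: 'm::zero fmat list \<Rightarrow> 'r::comm_ring_1)
       = path_sum m (replicate l (block s W)) delta \<alpha> \<beta>"
proof -
  have "odot_entry s m W l \<alpha> \<beta> = (\<Sum>js\<in>paths m l \<alpha> \<beta>. (delta (path_blocks s W js) :: _ \<Rightarrow> 'r))"
    unfolding odot_entry_def by (simp add: fun_eq_iff sum_fun_apply)
  then show ?thesis using sum_paths_eq_path_sum[OF assms, of delta s W l \<beta>] by simp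
qed

lemma path_sum_odot_zero:
  fixes scM :: "'r::comm_ring_1 \<Rightarrow> 'm::ab_group_add \<Rightarrow> 'm"
  assumes "module scM" "module scV" "odot_zero scM s m W L" "multilinear scM scV s g" "\<alpha> < m" "\<beta> < m"
  shows "path_sum m (replicate L (block s W)) g \<alpha> \<beta> = 0"
proof -
  define c where "c = (odot_entry s m W L \<alpha> \<beta> :: 'm fmat list \<Rightarrow> 'r)"
  have cT: "c \<in> tensor_rel scM s" using assms(3,5,6) unfolding odot_zero_def c_def by blast
  have "tensor_eval scV g c = 0" using tensor_rel_eval_zero[OF assms(2,4) cT] .
  moreover have c: "c = path_sum m (replicate L (block s W)) delta \<alpha> \<beta>"
    unfolding c_def by (rule odot_entry_eq_path_sum[OF assms(5)])
  moreover have "tensor_eval scV g (path_sum m (replicate L (block s W)) delta \<alpha> \<beta>)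
       = path_sum m (replicate L (block s W)) (\<lambda>ys. tensor_eval scV g (delta ys)) \<alpha> \<beta>"
  proof (rule conjunct2[OF path_sum_additive_on[where A = "{c. finite {ys. c ys \<noteq> 0}}"]])
    show "(0::'m fmat list \<Rightarrow> 'r) \<in> {c. finite {ys. c ys \<noteq> 0}}" by simp
    show "x + y \<in> {c. finite {ys. c ys \<noteq> 0}}" if "x \<in> {c. finite {ys. c ys \<noteq> 0}}" "y \<in> {c. finite {ys. c ys \<noteq> 0}}" for x y :: "'m fmat list \<Rightarrow> 'r"
      using that by (auto intro: finite_subset[of _ "{ys. x ys \<noteq> 0} \<union> {ys. y ys \<noteq> 0}"])
    show "tensor_eval scV g (x + y) = tensor_eval scV g x + tensor_eval scV g y"
      if "x \<in> {c. finite {ys. c ys \<noteq> 0}}" "y \<in> {c. finite {ys. c ys \<noteq> 0}}" for x y :: "'m fmat list \<Rightarrow> 'r"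
      using tensor_eval_add[OF assms(2), of x y g] that by (simp add: plus_fun_def)
    show "tensor_eval scV g 0 = 0" by (simp add: tensor_eval_def)
    show "is_block_list s (replicate L (block s W))" by simp
    show "delta ys \<in> {c. finite {ys. c ys \<noteq> 0}}" for ys :: "'m fmat list" by (simp add: supp_delta)
  qed
  ultimately show ?thesis by (simp add: tensor_eval_delta[OF assms(2)])
qed

lemma path_sum_odot_zero_infix:
  fixes scM :: "'r::comm_ring_1 \<Rightarrow> 'm::ab_group_add \<Rightarrow> 'm"
  assumes "module scM" "module scV" "odot_zero scM s m W L" "multilinear scM scV s g" "\<alpha> < m" "\<beta> < m"
    "is_block_list s Pre" "is_block_list s Suf"
  shows "path_sum m (Pre @ replicate L (block s W) @ Suf) g \<alpha> \<beta> = 0"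
proof -
  have inner: "path_sum m (replicate L (block s W) @ Suf) (\<lambda>zs. g (ys @ zs)) q \<beta> = 0"
    if ys: "is_mat_list s ys" and q: "q < m" for ys q
  proof -
    have "path_sum m (replicate L (block s W) @ Suf) (\<lambda>zs. g (ys @ zs)) q \<beta>
       = (\<Sum>r<m. path_sum m (replicate L (block s W)) (\<lambda>zs. path_sum m Suf (\<lambda>ws. g (ys @ zs @ ws)) r \<beta>) q r)"
      by (simp add: path_sum_append[OF q])
    also have "\<dots> = (\<Sum>r<m. 0)"
    proof (intro sum.cong refl)
      fix r assume "r \<in> {..<m}"
      have "multilinear scM scV s (\<lambda>zs. path_sum m Suf (\<lambda>ws. (\<lambda>us. g (ys @ us)) (zs @ ws)) r \<beta>)"
        by (rule multilinear_path_sum[OF assms(2) multilinear_fix_prefix[OF assms(4) ys] assms(8)])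
      then show "path_sum m (replicate L (block s W)) (\<lambda>zs. path_sum m Suf (\<lambda>ws. g (ys @ zs @ ws)) r \<beta>) q r = 0"
        using path_sum_odot_zero[OF assms(1,2,3) _ q] \<open>r \<in> {..<m}\<close> by simp
    qed
    finally show ?thesis by simp
  qed
  have "path_sum m (Pre @ replicate L (block s W) @ Suf) g \<alpha> \<beta>
     = (\<Sum>q<m. path_sum m Pre (\<lambda>ys. path_sum m (replicate L (block s W) @ Suf) (\<lambda>zs. g (ys @ zs)) q \<beta>) \<alpha> q)"
    by (rule path_sum_append[OF assms(5)])
  also have "\<dots> = (\<Sum>q<m. path_sum m Pre (\<lambda>ys. 0) \<alpha> q)"
    by (intro sum.cong refl path_sum_cong[OF assms(7)]) (auto simp: inner)
  finally show ?thesis by (simp add: path_sum_zero)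
qed

lemma tensor_rel_zero: "(0::'m::ab_group_add fmat list \<Rightarrow> 'r::comm_ring_1) \<in> tensor_rel sc s"
  using tensor_rel.zero[of sc s] by (simp add: zero_fun_def)

lemma tensor_rel_plus: "x \<in> tensor_rel sc s \<Longrightarrow> y \<in> tensor_rel sc s \<Longrightarrow> x + y \<in> tensor_rel sc s"
  using tensor_rel.add[of x sc s y] by (simp add: plus_fun_def)

lemma tensor_rel_minus: "x \<in> tensor_rel sc s \<Longrightarrow> y \<in> tensor_rel sc s \<Longrightarrow> x - y \<in> tensor_rel sc s"
proof -
  assume x: "x \<in> tensor_rel sc s" and y: "y \<in> tensor_rel sc s"
  have "(\<lambda>z. - 1 * y z) \<in> tensor_rel sc s" using tensor_rel.smult[OF y] .
  from tensor_rel.add[OF x this] show ?thesis by (simp add: fun_diff_def)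
qed

lemma tensor_rel_sum: "(\<And>i. i \<in> I \<Longrightarrow> F i \<in> tensor_rel sc s) \<Longrightarrow> sum F I \<in> tensor_rel sc s"
  using sum_closed_additive[of "tensor_rel sc s" id I F, OF tensor_rel_zero tensor_rel_plus] by auto

text \<open>The map \<open>c \<mapsto> c \<otimes> zs\<close> on formal combinations.\<close>

definition append_tensor :: "'m fmat list \<Rightarrow> ('m fmat list \<Rightarrow> 'r) \<Rightarrow> ('m fmat list \<Rightarrow> 'r::zero)" where
  "append_tensor zs c = (\<lambda>ys. if length zs \<le> length ys \<and> drop (length ys - length zs) ys = zs
                       then c (take (length ys - length zs) ys) else 0)"

lemma append_tensor_delta: "append_tensor zs (delta xs) = (delta (xs @ zs) :: _ \<Rightarrow> 'r::comm_ring_1)"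
proof (rule ext)
  fix ys :: "'a fmat list"
  show "append_tensor zs (delta xs) ys = (delta (xs @ zs) ys :: 'r)"
  proof (cases "ys = xs @ zs")
    case True then show ?thesis by (simp add: append_tensor_def delta_def)
  next
    case False
    have "take (length ys - length zs) ys \<noteq> xs" if "drop (length ys - length zs) ys = zs"
      using False that append_take_drop_id[of "length ys - length zs" ys] by metis
    then show ?thesis using False by (auto simp: append_tensor_def delta_def)
  qed
qed

lemma append_tensor_add: "append_tensor zs (c + d) = append_tensor zs c + (append_tensor zs d :: _ \<Rightarrow> 'r::monoid_add)"
  by (auto simp: append_tensor_def fun_eq_iff)

lemma append_tensor_zero: "append_tensor zs 0 = (0 :: _ \<Rightarrow> 'r::zero)"
  by (auto simp: append_tensor_def fun_eq_iff)

lemma append_tensor_rel: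
  fixes sc :: "'r::comm_ring_1 \<Rightarrow> 'm::ab_group_add \<Rightarrow> 'm" and c :: "'m fmat list \<Rightarrow> 'r"
  assumes "is_mat_list s zs" "c \<in> tensor_rel sc s"
  shows "append_tensor zs c \<in> tensor_rel sc s"
  using assms(2)
proof (induction rule: tensor_rel.induct)
  case zero
  show ?case by (simp add: append_tensor_def tensor_rel.zero)
next
  case (add a b)
  have "append_tensor zs (\<lambda>x. a x + b x) = (\<lambda>x. append_tensor zs a x + append_tensor zs b x)" by (auto simp: append_tensor_def fun_eq_iff)
  then show ?case using tensor_rel.add[OF add.IH] by metis
next
  case (smult a r)
  have "append_tensor zs (\<lambda>x. r * a x) = (\<lambda>x. r * append_tensor zs a x)" by (auto simp: append_tensor_def fun_eq_iff)
  then show ?case using tensor_rel.smult[OF smult.IH] by metis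
next
  case (gen_add As Bs A B)
  have "append_tensor zs (\<lambda>x. delta (As @ [madd A B] @ Bs) x - delta (As @ [A] @ Bs) x - delta (As @ [B] @ Bs) x :: 'r)
     = (\<lambda>x. append_tensor zs (delta (As @ [madd A B] @ Bs)) x - append_tensor zs (delta (As @ [A] @ Bs)) x - append_tensor zs (delta (As @ [B] @ Bs)) x)"
    by (auto simp: append_tensor_def fun_eq_iff)
  also have "\<dots> = (\<lambda>x. delta (As @ [madd A B] @ (Bs @ zs)) x - delta (As @ [A] @ (Bs @ zs)) x - delta (As @ [B] @ (Bs @ zs)) x)"
    by (simp add: append_tensor_delta)
  finally show ?case by (rule ssubst) (rule tensor_rel.gen_add, use gen_add assms(1) in \<open>auto simp: is_mat_list_def\<close>)
next
  case (gen_smult As Bs A r)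
  have "append_tensor zs (\<lambda>x. delta (As @ [msc sc r A] @ Bs) x - r * delta (As @ [A] @ Bs) x :: 'r)
     = (\<lambda>x. append_tensor zs (delta (As @ [msc sc r A] @ Bs)) x - r * append_tensor zs (delta (As @ [A] @ Bs)) x)"
    by (auto simp: append_tensor_def fun_eq_iff)
  also have "\<dots> = (\<lambda>x. delta (As @ [msc sc r A] @ (Bs @ zs)) x - r * delta (As @ [A] @ (Bs @ zs)) x)"
    by (simp add: append_tensor_delta)
  finally show ?case by (rule ssubst) (rule tensor_rel.gen_smult, use gen_smult assms(1) in \<open>auto simp: is_mat_list_def\<close>)
qed

lemma odot_zero_mono_add:
  fixes sc :: "'r::comm_ring_1 \<Rightarrow> 'm::ab_group_add \<Rightarrow> 'm"
  assumes "odot_zero sc s m W L"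
  shows "odot_zero sc s m W (L + k)"
  unfolding odot_zero_def
proof (intro allI impI)
  fix \<alpha> \<beta> assume a: "\<alpha> < m" and b: "\<beta> < m"
  let ?R = "\<lambda>l. replicate l (block s W)"
  define \<Phi> where "\<Phi> q c = path_sum m (?R k) (\<lambda>zs. append_tensor zs c) q \<beta>" for q and c :: "'m fmat list \<Rightarrow> 'r"
  have \<Phi>add: "\<Phi> q (x + y) = \<Phi> q x + \<Phi> q y" for q x y
    unfolding \<Phi>_def append_tensor_add by (rule path_sum_add)
  have \<Phi>0: "\<Phi> q 0 = 0" for q unfolding \<Phi>_def append_tensor_zero by (rule path_sum_zero)
  have "(odot_entry s m W (L + k) \<alpha> \<beta> :: 'm fmat list \<Rightarrow> 'r) = path_sum m (?R L @ ?R k) delta \<alpha> \<beta>"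
    by (subst odot_entry_eq_path_sum[OF a]) (simp add: replicate_add)
  also have "\<dots> = (\<Sum>q<m. path_sum m (?R L) (\<lambda>ys. path_sum m (?R k) (\<lambda>zs. delta (ys @ zs)) q \<beta>) \<alpha> q)"
    by (rule path_sum_append[OF a])
  also have "\<dots> = (\<Sum>q<m. path_sum m (?R L) (\<lambda>ys. \<Phi> q (delta ys)) \<alpha> q)"
    by (simp add: \<Phi>_def append_tensor_delta)
  also have "\<dots> = (\<Sum>q<m. \<Phi> q (path_sum m (?R L) delta \<alpha> q))"
    by (intro sum.cong refl) (rule path_sum_additive[where \<Phi>="\<Phi> _", symmetric], rule \<Phi>add, rule \<Phi>0)
  finally have eq: "(odot_entry s m W (L + k) \<alpha> \<beta> :: 'm fmat list \<Rightarrow> 'r) = (\<Sum>q<m. \<Phi> q (path_sum m (?R L) delta \<alpha> q))" .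
  have "\<Phi> q (path_sum m (?R L) delta \<alpha> q) \<in> tensor_rel sc s" if q: "q < m" for q
  proof -
    have "path_sum m (?R L) delta \<alpha> q = (odot_entry s m W L \<alpha> q :: 'm fmat list \<Rightarrow> 'r)"
      by (rule odot_entry_eq_path_sum[OF a, symmetric])
    then have inT: "path_sum m (?R L) delta \<alpha> q \<in> tensor_rel sc s"
      using assms a q unfolding odot_zero_def by auto
    show ?thesis unfolding \<Phi>_def
      by (rule path_sum_closed[where s=s]) (auto intro: tensor_rel_zero tensor_rel_plus append_tensor_rel[OF _ inT])
  qed
  then show "(odot_entry s m W (L + k) \<alpha> \<beta> :: 'm fmat list \<Rightarrow> 'r) \<in> tensor_rel sc s"
    unfolding eq by (auto intro: tensor_rel_sum)
qed

lemma odot_zero_mono: "odot_zero sc s m W L \<Longrightarrow> L \<le> l \<Longrightarrow> odot_zero sc s m W l"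
  using odot_zero_mono_add[of sc s m W L "l - L"] by simp

lemma idx_lt: "i < (s::nat) \<Longrightarrow> (\<alpha> * s + i < s * m) \<longleftrightarrow> \<alpha> < m"
proof
  assume i: "i < s" and h: "\<alpha> * s + i < s * m"
  show "\<alpha> < m"
  proof (rule ccontr)
    assume "\<not> \<alpha> < m" then have "m * s \<le> \<alpha> * s" by (intro mult_le_mono1) simp
    then have "s * m \<le> \<alpha> * s + i" by (metis mult.commute trans_le_add1)
    with h show False by linarith
  qed
next
  assume i: "i < s" and a: "\<alpha> < m"
  have "\<alpha> * s + i < \<alpha> * s + s" using i by simp
  also have "\<dots> = Suc \<alpha> * s" by simp
  also have "\<dots> \<le> m * s" using a by (intro mult_le_mono1) simp
  finally show "\<alpha> * s + i < s * m" by (simp add: mult.commute)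
qed

lemma idx_sub: "m \<le> \<alpha> \<Longrightarrow> \<alpha> * s + i - (s::nat) * m = (\<alpha> - m) * s + i"
proof -
  assume "m \<le> \<alpha>" then obtain k where "\<alpha> = m + k" by (metis le_add_diff_inverse)
  then show ?thesis by (simp add: algebra_simps)
qed

lemma block_assemble:
  assumes "\<alpha> < m" "\<beta> < m"
  shows "block s (assemble s m G) \<alpha> \<beta> = (\<lambda>i j. if i < s \<and> j < s then G \<alpha> \<beta> i j else 0)"
  using assms by (auto simp: block_def assemble_def fun_eq_iff idx_lt)

lemma block_assemble_mat:
  assumes "\<alpha> < m" "\<beta> < m" "is_mat s (G \<alpha> \<beta>)"
  shows "block s (assemble s m G) \<alpha> \<beta> = G \<alpha> \<beta>"
  using assms by (auto simp: block_assemble fun_eq_iff is_mat_def)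

lemma assemble_cong:
  assumes "\<And>\<alpha> \<beta>. \<alpha> < m \<Longrightarrow> \<beta> < m \<Longrightarrow> G \<alpha> \<beta> = G' \<alpha> \<beta>"
  shows "assemble s m G = assemble s m G'"
proof -
  have "i < s * m \<Longrightarrow> i div s < m" for i
    by (metis less_mult_imp_div_less mult.commute)
  then show ?thesis using assms by (auto simp: assemble_def fun_eq_iff)
qed

lemma is_mat_assemble: "is_mat (s * m) (assemble s m G)"
  by (auto simp: is_mat_def assemble_def)

lemma assemble_zero: "assemble s m (\<lambda>_ _. 0) = 0"
  by (auto simp: assemble_def fun_eq_iff)

lemma block_diff: "block s (A - B) \<alpha> \<beta> = block s A \<alpha> \<beta> - block s B \<alpha> \<beta>" for A :: "'a::ab_group_add fmat"
  by (auto simp: block_def fun_eq_iff)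
lemma block_zero: "block s 0 \<alpha> \<beta> = 0"
  by (auto simp: block_def fun_eq_iff)
lemma block_sum: "block s (sum F I) \<alpha> \<beta> = (\<Sum>i\<in>I. block s (F i) \<alpha> \<beta>)" for F :: "_ \<Rightarrow> 'a::comm_monoid_add fmat"
  unfolding block_def by (auto simp: fun_eq_iff sum_fun_apply)

lemma block_blockdiag:
  assumes "\<alpha> < m" "\<beta> < m" "is_mat s Y"
  shows "block s (blockdiag s m Y) \<alpha> \<beta> = (if \<alpha> = \<beta> then Y else 0)"
  unfolding blockdiag_def using assms
  by (subst block_assemble_mat) (auto simp: is_mat_def zero_fun_def)

lemma block_dsum:
  assumes "\<alpha> < m + m'" "\<beta> < m + m'"
  shows "block s (dsum (s * m) (s * m') X X') \<alpha> \<beta> =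
     (if \<alpha> < m \<and> \<beta> < m then block s X \<alpha> \<beta>
      else if m \<le> \<alpha> \<and> m \<le> \<beta> then block s X' (\<alpha> - m) (\<beta> - m) else 0)"
proof -
  have lt: "i < s \<Longrightarrow> (\<alpha> * s + i < s * m) \<longleftrightarrow> \<alpha> < m" for i \<alpha> m by (rule idx_lt)
  have lt2: "i < s \<Longrightarrow> (\<alpha> * s + i < s * m + s * m') \<longleftrightarrow> \<alpha> < m + m'" for i \<alpha>
    using idx_lt[of i s \<alpha> "m + m'"] by (simp add: distrib_left)
  have ge: "i < s \<Longrightarrow> (s * m \<le> \<alpha> * s + i) \<longleftrightarrow> m \<le> \<alpha>" for i \<alpha>
    using lt[of i \<alpha> m] by linarith
  show ?thesis using assms
    by (auto simp: block_def dsum_def fun_eq_iff lt lt2 ge idx_sub not_less)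
qed

lemma mat_eq_blocks:
  assumes "is_mat (s * m) A" "is_mat (s * m) B" "\<And>\<alpha> \<beta>. \<alpha> < m \<Longrightarrow> \<beta> < m \<Longrightarrow> block s A \<alpha> \<beta> = block s B \<alpha> \<beta>"
  shows "A = B"
proof (intro ext)
  fix i j
  show "A i j = B i j"
  proof (cases "i < s * m \<and> j < s * m")
    case True
    then have s: "0 < s" by (cases s) auto
    have d: "i div s < m" "j div s < m" using True
      by (metis less_mult_imp_div_less mult.commute)+
    have "block s A (i div s) (j div s) (i mod s) (j mod s) = block s B (i div s) (j div s) (i mod s) (j mod s)"
      using assms(3)[OF d] by simp
    then show ?thesis using s by (simp add: block_def mult.commute[of "i div s"] mult.commute[of "j div s"])
  next
    case False then show ?thesis using assms(1,2) by (auto simp: is_mat_def)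
  qed
qed

lemma block_W_dsum:
  fixes X :: "'a::ab_group_add fmat"
  assumes "\<alpha> < m + m'" "\<beta> < m + m'" "is_mat s Y"
  shows "block s (msub (dsum (s * m) (s * m') X X') (blockdiag s (m + m') Y)) \<alpha> \<beta> =
     (if \<alpha> < m \<and> \<beta> < m then block s (msub X (blockdiag s m Y)) \<alpha> \<beta>
      else if m \<le> \<alpha> \<and> m \<le> \<beta> then block s (msub X' (blockdiag s m' Y)) (\<alpha> - m) (\<beta> - m) else 0)"
  using assms
  by (auto simp: msub_eq block_diff block_dsum block_blockdiag block_zero)

lemma sum_lessThan_add: "sum f {..<m + k} = sum f {..<m} + (\<Sum>q<k. f (m + q))" for f :: "nat \<Rightarrow> 'a::comm_monoid_add"
  by (induction k) (auto simp: add.assoc)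

lemma path_sum_zero_head:
  assumes "is_block_list s Bs" "\<And>ys. is_mat_list s ys \<Longrightarrow> 0 \<in> set ys \<Longrightarrow> g ys = 0"
  shows "path_sum M Bs (\<lambda>ys. g (0 # ys)) a b = 0"
proof -
  have "path_sum M Bs (\<lambda>ys. g (0 # ys)) a b = path_sum M Bs (\<lambda>ys. 0) a b"
    by (rule path_sum_cong[OF assms(1)]) (auto simp: assms(2))
  then show ?thesis by (simp add: path_sum_zero)
qed

lemma path_sum_dsum_upper:
  fixes g :: "'m::zero fmat list \<Rightarrow> 'v::comm_monoid_add"
  assumes B: "\<And>\<alpha> \<beta>. \<alpha> < m + m' \<Longrightarrow> \<beta> < m + m' \<Longrightarrow> B \<alpha> \<beta> =
        (if \<alpha> < m \<and> \<beta> < m then B1 \<alpha> \<beta> else if m \<le> \<alpha> \<and> m \<le> \<beta> then B2 (\<alpha> - m) (\<beta> - m) else 0)"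
    and mB: "\<And>a b. is_mat s (B a b)"
    and g0: "\<And>ys. is_mat_list s ys \<Longrightarrow> 0 \<in> set ys \<Longrightarrow> g ys = 0"
    and a: "\<alpha> < m" and b: "\<beta> < m + m'"
  shows "path_sum (m + m') (replicate l B) g \<alpha> \<beta> = (if \<beta> < m then path_sum m (replicate l B1) g \<alpha> \<beta> else 0)"
  using g0 a
proof (induction l arbitrary: g \<alpha>)
  case 0
  then show ?case using b by auto
next
  case (Suc l)
  have g0: "g ys = 0" if "is_mat_list s ys" "0 \<in> set ys" for ys
    using Suc.prems(1) that by (simp add: zero_fun_def)
  have g0': "g (B \<alpha> q # ys) = 0" if "is_mat_list s ys" "0 \<in> set ys" for q ys
    using g0[of "B \<alpha> q # ys"] mB that by simp
  have IH: "path_sum (m + m') (replicate l B) (\<lambda>ys. g (B \<alpha> q # ys)) q \<beta>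
      = (if \<beta> < m then path_sum m (replicate l B1) (\<lambda>ys. g (B1 \<alpha> q # ys)) q \<beta> else 0)" if "q < m" for q
  proof -
    have "path_sum (m + m') (replicate l B) (\<lambda>ys. g (B \<alpha> q # ys)) q \<beta>
        = (if \<beta> < m then path_sum m (replicate l B1) (\<lambda>ys. g (B \<alpha> q # ys)) q \<beta> else 0)"
      by (rule Suc.IH) (use g0' that in \<open>auto simp: zero_fun_def\<close>)
    then show ?thesis using B[of \<alpha> q] Suc.prems(2) that by simp
  qed
  have "B \<alpha> (m + q) = 0" if "q < m'" for q
    using B[of \<alpha> "m + q"] Suc.prems(2) that by simp
  then have "path_sum (m + m') (replicate l B) (\<lambda>ys. g (B \<alpha> (m + q) # ys)) (m + q) \<beta> = 0" if "q < m'" for q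
    using path_sum_zero_head[of s "replicate l B" g, OF _ g0] mB that by simp
  then show ?case by (simp add: sum_lessThan_add IH)
qed

lemma path_sum_dsum_lower:
  fixes g :: "'m::zero fmat list \<Rightarrow> 'v::comm_monoid_add"
  assumes B: "\<And>\<alpha> \<beta>. \<alpha> < m + m' \<Longrightarrow> \<beta> < m + m' \<Longrightarrow> B \<alpha> \<beta> =
        (if \<alpha> < m \<and> \<beta> < m then B1 \<alpha> \<beta> else if m \<le> \<alpha> \<and> m \<le> \<beta> then B2 (\<alpha> - m) (\<beta> - m) else 0)"
    and mB: "\<And>a b. is_mat s (B a b)"
    and g0: "\<And>ys. is_mat_list s ys \<Longrightarrow> 0 \<in> set ys \<Longrightarrow> g ys = 0"
    and a: "m \<le> \<alpha>" "\<alpha> < m + m'" and b: "\<beta> < m + m'"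
  shows "path_sum (m + m') (replicate l B) g \<alpha> \<beta>
      = (if m \<le> \<beta> then path_sum m' (replicate l B2) g (\<alpha> - m) (\<beta> - m) else 0)"
  using g0 a
proof (induction l arbitrary: g \<alpha>)
  case 0
  then show ?case using b by auto
next
  case (Suc l)
  have g0: "g ys = 0" if "is_mat_list s ys" "0 \<in> set ys" for ys
    using Suc.prems(1) that by (simp add: zero_fun_def)
  have g0': "g (B \<alpha> q # ys) = 0" if "is_mat_list s ys" "0 \<in> set ys" for q ys
    using g0[of "B \<alpha> q # ys"] mB that by simp
  have IH: "path_sum (m + m') (replicate l B) (\<lambda>ys. g (B \<alpha> (m + q) # ys)) (m + q) \<beta>
      = (if m \<le> \<beta> then path_sum m' (replicate l B2) (\<lambda>ys. g (B2 (\<alpha> - m) q # ys)) q (\<beta> - m) else 0)"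
    if "q < m'" for q
  proof -
    have "path_sum (m + m') (replicate l B) (\<lambda>ys. g (B \<alpha> (m + q) # ys)) (m + q) \<beta>
        = (if m \<le> \<beta> then path_sum m' (replicate l B2) (\<lambda>ys. g (B \<alpha> (m + q) # ys)) (m + q - m) (\<beta> - m) else 0)"
      by (rule Suc.IH) (use g0' that in \<open>auto simp: zero_fun_def\<close>)
    then show ?thesis using B[of \<alpha> "m + q"] Suc.prems(2,3) that by simp
  qed
  have "B \<alpha> q = 0" if "q < m" for q
    using B[of \<alpha> q] Suc.prems(2,3) that by simp
  then have "path_sum (m + m') (replicate l B) (\<lambda>ys. g (B \<alpha> q # ys)) q \<beta> = 0" if "q < m" for q
    using path_sum_zero_head[of s "replicate l B" g, OF _ g0] mB that by simp
  then show ?case using Suc.prems(2) by (simp add: sum_lessThan_add IH)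
qed

lemma path_sum_dsum:
  fixes g :: "'m::zero fmat list \<Rightarrow> 'v::comm_monoid_add"
  assumes B: "\<And>\<alpha> \<beta>. \<alpha> < m + m' \<Longrightarrow> \<beta> < m + m' \<Longrightarrow> B \<alpha> \<beta> =
        (if \<alpha> < m \<and> \<beta> < m then B1 \<alpha> \<beta> else if m \<le> \<alpha> \<and> m \<le> \<beta> then B2 (\<alpha> - m) (\<beta> - m) else 0)"
    and mB: "\<And>a b. is_mat s (B a b)"
    and g0: "\<And>ys. is_mat_list s ys \<Longrightarrow> 0 \<in> set ys \<Longrightarrow> g ys = 0"
    and a: "\<alpha> < m + m'" and b: "\<beta> < m + m'"
  shows "path_sum (m + m') (replicate l B) g \<alpha> \<beta> =
     (if \<alpha> < m \<and> \<beta> < m then path_sum m (replicate l B1) g \<alpha> \<beta>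
      else if m \<le> \<alpha> \<and> m \<le> \<beta> then path_sum m' (replicate l B2) g (\<alpha> - m) (\<beta> - m) else 0)"
proof (cases "\<alpha> < m")
  case True
  then show ?thesis using path_sum_dsum_upper[OF B mB g0 True b] by simp
next
  case False
  then show ?thesis using path_sum_dsum_lower[OF B mB g0 _ a b] by simp
qed

lemma multilinear_zero_entry: "multilinear scM scV s g \<Longrightarrow> is_mat_list s ys \<Longrightarrow> 0 \<in> set ys \<Longrightarrow> g ys = 0"
proof -
  assume a: "multilinear scM scV s g" "is_mat_list s ys" "0 \<in> set ys"
  obtain As Bs where ys: "ys = As @ 0 # Bs" using a(3) split_list by metis
  show ?thesis using multilinear_zero_slot[OF a(1), of As Bs] a(2) unfolding ys by simp
qed

lemma delta_zero_entry_tensor_rel: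
  fixes sc :: "'r::comm_ring_1 \<Rightarrow> 'm::ab_group_add \<Rightarrow> 'm"
  assumes "module sc" "is_mat_list s ys" "0 \<in> set ys"
  shows "(delta ys :: _ \<Rightarrow> 'r) \<in> tensor_rel sc s"
proof -
  obtain As Bs where ys: "ys = As @ 0 # Bs" using assms(3) by (metis split_list)
  have "msc sc 0 0 = 0" by (simp add: msc_def module.scale_zero_left[OF assms(1)] zero_fun_def)
  moreover have "(\<lambda>x. delta (As @ [msc sc 0 0] @ Bs) x - 0 * delta (As @ [0] @ Bs) x) \<in> tensor_rel sc s"
    by (rule tensor_rel.gen_smult) (use assms(2) ys in \<open>auto simp: is_mat_list_def\<close>)
  ultimately show ?thesis using ys by simp
qed

text \<open>Tuples with a zero factor vanish in the tensor power; dropping them from the formal sums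
  makes the path sums of a block diagonal matrix split along the blocks.\<close>

definition delta_nonzero :: "'m::zero fmat list \<Rightarrow> ('m fmat list \<Rightarrow> 'r::comm_ring_1)" where
  "delta_nonzero ys = (if 0 \<in> set ys then 0 else delta ys)"

lemma odot_zero_iff_delta_nonzero:
  fixes sc :: "'r::comm_ring_1 \<Rightarrow> 'm::ab_group_add \<Rightarrow> 'm"
  assumes sc: "module sc"
  shows "odot_zero sc s m W L \<longleftrightarrow>
    (\<forall>\<alpha><m. \<forall>\<beta><m. (path_sum m (replicate L (block s W)) delta_nonzero \<alpha> \<beta> :: _ \<Rightarrow> 'r) \<in> tensor_rel sc s)"
proof -
  have "delta ys - delta_nonzero ys \<in> tensor_rel sc s" if "is_mat_list s ys" for ys :: "'m fmat list"
    by (cases "0 \<in> set ys") (simp_all add: delta_nonzero_def delta_zero_entry_tensor_rel[OF sc that] tensor_rel_zero)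
  then have "path_sum m (replicate L (block s W)) (\<lambda>ys. delta ys - delta_nonzero ys) \<alpha> \<beta> \<in> tensor_rel sc s" for \<alpha> \<beta>
    by (intro path_sum_closed[of _ s] tensor_rel_zero tensor_rel_plus) (auto simp: fun_diff_def)
  then have diff: "(path_sum m (replicate L (block s W)) delta \<alpha> \<beta> :: _ \<Rightarrow> 'r)
      - path_sum m (replicate L (block s W)) delta_nonzero \<alpha> \<beta> \<in> tensor_rel sc s" for \<alpha> \<beta>
    by (simp add: path_sum_diff)
  have "x \<in> tensor_rel sc s \<longleftrightarrow> y \<in> tensor_rel sc s" if "x - y \<in> tensor_rel sc s" for x y :: "_ \<Rightarrow> 'r"
    using tensor_rel_minus[OF _ that, of x] tensor_rel_plus[OF _ that, of y] by auto
  from this[OF diff] show ?thesis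
    unfolding odot_zero_def by (simp add: odot_entry_eq_path_sum)
qed

lemma is_mat_dsum: "is_mat n X \<Longrightarrow> is_mat n' X' \<Longrightarrow> is_mat (n + n') (dsum n n' X X')"
  by (auto simp: is_mat_def dsum_def)

lemma NilpE:
  assumes "(n, X) \<in> Nilp sc s Y"
  obtains m L where "1 \<le> m" "n = s * m" "is_mat n X" "odot_zero sc s m (msub X (blockdiag s m Y)) L"
  using assms unfolding Nilp_def by blast

lemma odot_zero_dsum:
  fixes sc :: "'r::comm_ring_1 \<Rightarrow> 'm::ab_group_add \<Rightarrow> 'm"
  assumes sc: "module sc" and Y: "is_mat s Y"
    and X: "odot_zero sc s m (msub X (blockdiag s m Y)) L"
    and X': "odot_zero sc s m' (msub X' (blockdiag s m' Y)) L"
  shows "odot_zero sc s (m + m') (msub (dsum (s * m) (s * m') X X') (blockdiag s (m + m') Y)) L"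
  unfolding odot_zero_iff_delta_nonzero[OF sc]
proof (intro allI impI)
  fix \<alpha> \<beta> assume a: "\<alpha> < m + m'" and b: "\<beta> < m + m'"
  have "(path_sum (m + m') (replicate L (block s (msub (dsum (s * m) (s * m') X X') (blockdiag s (m + m') Y))))
      delta_nonzero \<alpha> \<beta> :: _ \<Rightarrow> 'r) =
    (if \<alpha> < m \<and> \<beta> < m then path_sum m (replicate L (block s (msub X (blockdiag s m Y)))) delta_nonzero \<alpha> \<beta>
     else if m \<le> \<alpha> \<and> m \<le> \<beta>
       then path_sum m' (replicate L (block s (msub X' (blockdiag s m' Y)))) delta_nonzero (\<alpha> - m) (\<beta> - m)
     else 0)"
    by (rule path_sum_dsum[where s = s]) (use a b Y in \<open>auto simp: block_W_dsum delta_nonzero_def\<close>)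
  moreover have "m \<le> \<alpha> \<Longrightarrow> m \<le> \<beta> \<Longrightarrow> \<alpha> - m < m' \<and> \<beta> - m < m'"
    using a b by linarith
  ultimately show "(path_sum (m + m') (replicate L (block s (msub (dsum (s * m) (s * m') X X') (blockdiag s (m + m') Y))))
      delta_nonzero \<alpha> \<beta> :: _ \<Rightarrow> 'r) \<in> tensor_rel sc s"
    using X X' tensor_rel_zero[of sc s] unfolding odot_zero_iff_delta_nonzero[OF sc] by simp
qed

lemma Nilp_dsum:
  fixes sc :: "'r::comm_ring_1 \<Rightarrow> 'm::ab_group_add \<Rightarrow> 'm"
  assumes sc: "module sc" and Y: "is_mat s Y" and X: "(n, X) \<in> Nilp sc s Y" and X': "(n', X') \<in> Nilp sc s Y"
  shows "(n + n', dsum n n' X X') \<in> Nilp sc s Y"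
proof -
  obtain m L1 where m: "m \<ge> 1" "n = s * m" "is_mat n X" "odot_zero sc s m (msub X (blockdiag s m Y)) L1"
    using X by (elim NilpE)
  obtain m' L2 where m': "m' \<ge> 1" "n' = s * m'" "is_mat n' X'" "odot_zero sc s m' (msub X' (blockdiag s m' Y)) L2"
    using X' by (elim NilpE)
  have "odot_zero sc s (m + m') (msub (dsum n n' X X') (blockdiag s (m + m') Y)) (max L1 L2)"
    unfolding m(2) m'(2)
    by (intro odot_zero_dsum[OF sc Y] odot_zero_mono[OF m(4)] odot_zero_mono[OF m'(4)]) simp_all
  moreover have "1 \<le> m + m'" "n + n' = s * (m + m')"
    using m(1,2) m'(2) by (simp_all add: distrib_left)
  ultimately show ?thesis
    unfolding Nilp_def using is_mat_dsum[OF m(3) m'(3)] by blast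
qed

lemma series_term_assemble:
  assumes "0 < s"
  shows "series_term s Y f (s * m) X l =
     assemble s m (\<lambda>\<alpha> \<beta>. path_sum m (replicate l (block s (msub X (blockdiag s m Y)))) f \<alpha> \<beta>)"
proof -
  have sm: "s * m div s = m" using assms by simp
  have "(\<lambda>a b. \<Sum>js\<in>paths m l \<alpha> \<beta>. f (path_blocks s W js) a b) = path_sum m (replicate l (block s W)) f \<alpha> \<beta>"
    if "\<alpha> < m" for \<alpha> \<beta> W
  proof -
    have "(\<lambda>a b. \<Sum>js\<in>paths m l \<alpha> \<beta>. f (path_blocks s W js) a b) = (\<Sum>js\<in>paths m l \<alpha> \<beta>. f (path_blocks s W js))"
      by (simp add: fun_eq_iff sum_fun_apply)
    then show ?thesis using sum_paths_eq_path_sum[OF that] by simp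
  qed
  then show ?thesis unfolding series_term_def odot_apply_def sm
    by (intro assemble_cong) simp
qed

lemma nc_series_eq:
  assumes "\<And>l. N \<le> l \<Longrightarrow> series_term s Y f n X l = 0"
  shows "finite {l. series_term s Y f n X l \<noteq> (\<lambda>_ _. 0)} \<and> nc_series s Y f n X = (\<Sum>l<N. series_term s Y f n X l)"
proof -
  have sub: "{l. series_term s Y f n X l \<noteq> (\<lambda>_ _. 0)} \<subseteq> {..<N}"
  proof
    fix l assume "l \<in> {l. series_term s Y f n X l \<noteq> (\<lambda>_ _. 0)}"
    then have "series_term s Y f n X l \<noteq> 0" by (simp add: zero_fun_def)
    then show "l \<in> {..<N}" using assms by (meson lessThan_iff not_le)
  qed
  have "nc_series s Y f n X = (\<lambda>a b. \<Sum>l<N. series_term s Y f n X l a b)"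
    unfolding nc_series_def
  proof (intro ext sum.mono_neutral_left)
    show "finite {..<N}" by simp
    show "{l. series_term s Y f n X l \<noteq> (\<lambda>_ _. 0)} \<subseteq> {..<N}" by (rule sub)
    show "\<forall>i\<in>{..<N} - {l. series_term s Y f n X l \<noteq> (\<lambda>_ _. 0)}. series_term s Y f n X i a b = 0" for a b
      by auto
  qed
  also have "\<dots> = (\<Sum>l<N. series_term s Y f n X l)" by (simp add: fun_eq_iff sum_fun_apply)
  finally show ?thesis using sub finite_subset by blast
qed

lemma series_term_vanish:
  fixes scM :: "'r::comm_ring_1 \<Rightarrow> 'm::ab_group_add \<Rightarrow> 'm" and scN :: "'r \<Rightarrow> 'n::ab_group_add \<Rightarrow> 'n"
  assumes "module scM" "module scN" "multilinear scM (msc scN) s f" "odot_zero scM s m (msub X (blockdiag s m Y)) L"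
    "0 < s" "L \<le> l"
  shows "series_term s Y f (s * m) X l = 0"
proof -
  have "path_sum m (replicate l (block s (msub X (blockdiag s m Y)))) f \<alpha> \<beta> = 0" if "\<alpha> < m" "\<beta> < m" for \<alpha> \<beta>
  proof -
    have "replicate l (block s (msub X (blockdiag s m Y))) =
        [] @ replicate L (block s (msub X (blockdiag s m Y))) @ replicate (l - L) (block s (msub X (blockdiag s m Y)))"
      using assms(6) by (simp add: replicate_add[symmetric])
    then show ?thesis
      using path_sum_odot_zero_infix[OF assms(1) module_msc[OF assms(2)] assms(4,3) that, of "[]" "replicate (l - L) (block s (msub X (blockdiag s m Y)))"]
      by (auto simp: is_block_list_def)
  qed
  then have "series_term s Y f (s * m) X l = assemble s m (\<lambda>_ _. 0)"
    unfolding series_term_assemble[OF assms(5)] by (intro assemble_cong) simp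
  then show ?thesis by (simp add: assemble_zero)
qed

lemma is_mat_path_sum:
  fixes f :: "'m::zero fmat list \<Rightarrow> 'n::comm_monoid_add fmat"
  assumes "\<And>ys. is_mat_list s ys \<Longrightarrow> is_mat s (f ys)" "is_block_list s Bs"
  shows "is_mat s (path_sum m Bs f \<alpha> \<beta>)"
  using path_sum_closed[of "{x. is_mat s x}" s Bs f m \<alpha> \<beta>] assms by auto

lemma series_term_dsum:
  fixes scM :: "'r::comm_ring_1 \<Rightarrow> 'm::ab_group_add \<Rightarrow> 'm" and scV :: "'r \<Rightarrow> 'n::ab_group_add fmat \<Rightarrow> 'n fmat"
  assumes s: "0 < s" and Y: "is_mat s Y" and ml: "multilinear scM scV s f" and fm: "\<And>ys. is_mat_list s ys \<Longrightarrow> is_mat s (f ys)"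
  shows "series_term s Y f (s * m + s * m') (dsum (s * m) (s * m') X X') l =
     dsum (s * m) (s * m') (series_term s Y f (s * m) X l) (series_term s Y f (s * m') X' l)"
proof -
  have smm: "s * m + s * m' = s * (m + m')" by (simp add: distrib_left)
  define Wd where "Wd = msub (dsum (s * m) (s * m') X X') (blockdiag s (m + m') Y)"
  define W1 where "W1 = msub X (blockdiag s m Y)"
  define W2 where "W2 = msub X' (blockdiag s m' Y)"
  define P1 where "P1 \<alpha> \<beta> = path_sum m (replicate l (block s W1)) f \<alpha> \<beta>" for \<alpha> \<beta>
  define P2 where "P2 \<alpha> \<beta> = path_sum m' (replicate l (block s W2)) f \<alpha> \<beta>" for \<alpha> \<beta>
  define Pd where "Pd \<alpha> \<beta> = path_sum (m + m') (replicate l (block s Wd)) f \<alpha> \<beta>" for \<alpha> \<beta>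
  have lhs: "series_term s Y f (s * m + s * m') (dsum (s * m) (s * m') X X') l = assemble s (m + m') Pd"
    unfolding smm series_term_assemble[OF s] Pd_def Wd_def by (simp add: smm)
  have r1: "series_term s Y f (s * m) X l = assemble s m P1"
    unfolding series_term_assemble[OF s] P1_def W1_def by simp
  have r2: "series_term s Y f (s * m') X' l = assemble s m' P2"
    unfolding series_term_assemble[OF s] P2_def W2_def by simp
  have im: "is_mat s (path_sum M (replicate l (block s W)) f a b)" for M W a b
    by (rule is_mat_path_sum[OF fm]) (auto simp: is_block_list_def)
  show ?thesis unfolding lhs r1 r2
  proof (rule mat_eq_blocks[of s "m + m'"])
    show "is_mat (s * (m + m')) (assemble s (m + m') Pd)" by (rule is_mat_assemble)
    show "is_mat (s * (m + m')) (dsum (s * m) (s * m') (assemble s m P1) (assemble s m' P2))"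
      using is_mat_dsum[OF is_mat_assemble is_mat_assemble] smm by metis
    fix \<alpha> \<beta> assume a: "\<alpha> < m + m'" and b: "\<beta> < m + m'"
    have "block s (assemble s (m + m') Pd) \<alpha> \<beta> = Pd \<alpha> \<beta>"
      by (rule block_assemble_mat[OF a b]) (simp add: Pd_def im)
    also have "\<dots> = (if \<alpha> < m \<and> \<beta> < m then P1 \<alpha> \<beta>
      else if m \<le> \<alpha> \<and> m \<le> \<beta> then P2 (\<alpha> - m) (\<beta> - m) else 0)"
      unfolding Pd_def P1_def P2_def
      by (rule path_sum_dsum[where s = s]) (use a b Y multilinear_zero_entry[OF ml] in \<open>auto simp: Wd_def W1_def W2_def block_W_dsum\<close>)
    also have "\<dots> = block s (dsum (s * m) (s * m') (assemble s m P1) (assemble s m' P2)) \<alpha> \<beta>"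
      using a b by (auto simp: block_dsum block_assemble_mat P1_def P2_def im)
    finally show "block s (assemble s (m + m') Pd) \<alpha> \<beta> = block s (dsum (s * m) (s * m') (assemble s m P1) (assemble s m' P2)) \<alpha> \<beta>" .
  qed
qed

lemma dsum_add: "dsum n n' (A + B) (A' + B') = dsum n n' A A' + dsum n n' B B'" for A :: "'a::monoid_add fmat"
  by (auto simp: dsum_def fun_eq_iff)

lemma dsum_0: "dsum n n' 0 0 = (0 :: 'a::zero fmat)"
  by (auto simp: dsum_def fun_eq_iff)

lemma dsum_sum: "dsum n n' (\<Sum>i\<in>I. F i) (\<Sum>i\<in>I. G i) = (\<Sum>i\<in>I. dsum n n' (F i) (G i))" for F :: "_ \<Rightarrow> 'a::comm_monoid_add fmat"
proof (induction I rule: infinite_finite_induct)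
  case (infinite A) then show ?case using dsum_0[of n n'] by (simp add: zero_fun_def)
next
  case empty then show ?case using dsum_0[of n n'] by (simp add: zero_fun_def)
next
  case (insert x F') then show ?case by (simp only: sum.insert[OF insert(1,2)] dsum_add insert.IH)
qed

lemma sum_split_blocks: "(\<Sum>k<s * m. h k) = (\<Sum>\<gamma><m. \<Sum>t<s. h (\<gamma> * s + t))" for h :: "nat \<Rightarrow> 'a::comm_monoid_add"
proof (induction m)
  case 0 then show ?case by simp
next
  case (Suc m)
  have "(\<Sum>k<s * Suc m. h k) = (\<Sum>k<s * m + s. h k)" by (simp add: add.commute)
  also have "\<dots> = (\<Sum>k<s * m. h k) + (\<Sum>t<s. h (s * m + t))" by (rule sum_lessThan_add)
  also have "\<dots> = (\<Sum>\<gamma><Suc m. \<Sum>t<s. h (\<gamma> * s + t))" using Suc by (simp add: mult.commute)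
  finally show ?case .
qed

context module begin

lemma lmul_add: "lmul scale n S (A + B) = lmul scale n S A + lmul scale n S B"
  by (auto simp: lmul_def fun_eq_iff scale_right_distrib sum.distrib)
lemma lmul_zero: "lmul scale n S 0 = 0"
  by (auto simp: lmul_def fun_eq_iff)
lemma lmul_diff: "lmul scale n S (A - B) = lmul scale n S A - lmul scale n S B"
  by (auto simp: lmul_def fun_eq_iff scale_right_diff_distrib sum_subtractf)
lemma lmul_sum: "lmul scale n S (sum F I) = (\<Sum>i\<in>I. lmul scale n S (F i))"
proof (rule ext, rule ext)
  fix a b
  show "lmul scale n S (sum F I) a b = (\<Sum>i\<in>I. lmul scale n S (F i)) a b"
  proof (cases "a < n \<and> b < n")
    case True then show ?thesis
      by (simp add: lmul_def sum_fun_apply scale_sum_right) (rule sum.swap)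
  next
    case False then show ?thesis by (auto simp: lmul_def sum_fun_apply)
  qed
qed
lemma rmul_add: "rmul scale n (A + B) S = rmul scale n A S + rmul scale n B S"
  by (auto simp: rmul_def fun_eq_iff scale_right_distrib sum.distrib)
lemma rmul_zero: "rmul scale n 0 S = 0"
  by (auto simp: rmul_def fun_eq_iff)
lemma rmul_diff: "rmul scale n (A - B) S = rmul scale n A S - rmul scale n B S"
  by (auto simp: rmul_def fun_eq_iff scale_right_diff_distrib sum_subtractf)
lemma rmul_sum: "rmul scale n (sum F I) S = (\<Sum>i\<in>I. rmul scale n (F i) S)"
proof (rule ext, rule ext)
  fix a b
  show "rmul scale n (sum F I) S a b = (\<Sum>i\<in>I. rmul scale n (F i) S) a b"
  proof (cases "a < n \<and> b < n")
    case True then show ?thesis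
      by (simp add: rmul_def sum_fun_apply scale_sum_right) (rule sum.swap)
  next
    case False then show ?thesis by (auto simp: rmul_def sum_fun_apply)
  qed
qed

lemma is_mat_lmul: "is_mat n (lmul scale n S X)" by (auto simp: is_mat_def lmul_def)
lemma is_mat_rmul: "is_mat n (rmul scale n X S)" by (auto simp: is_mat_def rmul_def)

lemma block_lmul:
  assumes "\<alpha> < m" "\<beta> < m"
  shows "block s (lmul scale (s * m) S X) \<alpha> \<beta> = (\<Sum>\<gamma><m. lmul scale s (block s S \<alpha> \<gamma>) (block s X \<gamma> \<beta>))"
proof (rule ext, rule ext)
  fix i j
  show "block s (lmul scale (s * m) S X) \<alpha> \<beta> i j = (\<Sum>\<gamma><m. lmul scale s (block s S \<alpha> \<gamma>) (block s X \<gamma> \<beta>)) i j"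
  proof (cases "i < s \<and> j < s")
    case True
    have a: "\<alpha> * s + i < s * m" "\<beta> * s + j < s * m" using True assms by (auto simp: idx_lt)
    have "block s (lmul scale (s * m) S X) \<alpha> \<beta> i j = (\<Sum>k<s * m. scale (S (\<alpha> * s + i) k) (X k (\<beta> * s + j)))"
      using True a by (simp add: block_def lmul_def)
    also have "\<dots> = (\<Sum>\<gamma><m. \<Sum>t<s. scale (S (\<alpha> * s + i) (\<gamma> * s + t)) (X (\<gamma> * s + t) (\<beta> * s + j)))"
      by (rule sum_split_blocks)
    also have "\<dots> = (\<Sum>\<gamma><m. lmul scale s (block s S \<alpha> \<gamma>) (block s X \<gamma> \<beta>) i j)"
      using True by (intro sum.cong refl) (simp add: lmul_def block_def)
    finally show ?thesis by (simp add: sum_fun_apply)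
  next
    case False
    then show ?thesis by (auto simp: sum_fun_apply block_def lmul_def)
  qed
qed

lemma block_rmul:
  assumes "\<alpha> < m" "\<beta> < m"
  shows "block s (rmul scale (s * m) X S) \<alpha> \<beta> = (\<Sum>\<gamma><m. rmul scale s (block s X \<alpha> \<gamma>) (block s S \<gamma> \<beta>))"
proof (rule ext, rule ext)
  fix i j
  show "block s (rmul scale (s * m) X S) \<alpha> \<beta> i j = (\<Sum>\<gamma><m. rmul scale s (block s X \<alpha> \<gamma>) (block s S \<gamma> \<beta>)) i j"
  proof (cases "i < s \<and> j < s")
    case True
    have a: "\<alpha> * s + i < s * m" "\<beta> * s + j < s * m" using True assms by (auto simp: idx_lt)
    have "block s (rmul scale (s * m) X S) \<alpha> \<beta> i j = (\<Sum>k<s * m. scale (S k (\<beta> * s + j)) (X (\<alpha> * s + i) k))"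
      using True a by (simp add: block_def rmul_def)
    also have "\<dots> = (\<Sum>\<gamma><m. \<Sum>t<s. scale (S (\<gamma> * s + t) (\<beta> * s + j)) (X (\<alpha> * s + i) (\<gamma> * s + t)))"
      by (rule sum_split_blocks)
    also have "\<dots> = (\<Sum>\<gamma><m. rmul scale s (block s X \<alpha> \<gamma>) (block s S \<gamma> \<beta>) i j)"
      using True by (intro sum.cong refl) (simp add: rmul_def block_def)
    finally show ?thesis by (simp add: sum_fun_apply)
  next
    case False
    then show ?thesis by (auto simp: sum_fun_apply block_def rmul_def)
  qed
qed

lemma rmul_rmul: "rmul scale n (rmul scale n A T) S = rmul scale n A (rmatmul n T S)"
proof (rule ext, rule ext)
  fix i j
  show "rmul scale n (rmul scale n A T) S i j = rmul scale n A (rmatmul n T S) i j"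
  proof (cases "i < n \<and> j < n")
    case True
    have "rmul scale n (rmul scale n A T) S i j = (\<Sum>k<n. \<Sum>l<n. scale (S k j * T l k) (A i l))"
      using True by (simp add: rmul_def scale_sum_right)
    also have "\<dots> = (\<Sum>l<n. \<Sum>k<n. scale (T l k * S k j) (A i l))"
      by (subst sum.swap) (simp add: mult.commute)
    also have "\<dots> = rmul scale n A (rmatmul n T S) i j"
      using True by (simp add: rmul_def rmatmul_def scale_sum_left)
    finally show ?thesis .
  next
    case False then show ?thesis by (auto simp: rmul_def)
  qed
qed

lemma rmul_id: "is_mat n A \<Longrightarrow> rmul scale n A (idmat n) = A"
proof (rule ext, rule ext)
  fix i j assume A: "is_mat n A"
  show "rmul scale n A (idmat n) i j = A i j"
  proof (cases "i < n \<and> j < n")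
    case True
    have "rmul scale n A (idmat n) i j = (\<Sum>k<n. scale (if k = j then 1 else 0) (A i k))"
      using True by (auto simp: rmul_def idmat_def intro!: sum.cong)
    also have "\<dots> = (\<Sum>k<n. if k = j then A i k else 0)"
      by (intro sum.cong refl) simp
    also have "\<dots> = A i j" using True by simp
    finally show ?thesis .
  next
    case False then show ?thesis using A by (auto simp: rmul_def is_mat_def)
  qed
qed

end

lemma path_sum_1: "r < m \<Longrightarrow> path_sum m [B] H q r = H [B q r]"
  by simp

lemma path_sum_2: "r < m \<Longrightarrow> path_sum m [B1, B2] H q r = (\<Sum>k<m. H [B1 q k, B2 k r])"
  by simp

lemma path_sum_3: "r < m \<Longrightarrow> path_sum m [B1, B2, B3] H q r = (\<Sum>k<m. \<Sum>j<m. H [B1 q k, B2 k j, B3 j r])"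
  by simp

lemma path_sum_append3:
  assumes a: "\<alpha> < m"
  shows "path_sum m (Pre @ Mid @ Suf) g \<alpha> \<beta> =
    (\<Sum>q<m. \<Sum>r<m. path_sum m Pre (\<lambda>ys. path_sum m Mid (\<lambda>zs. path_sum m Suf (\<lambda>ws. g (ys @ zs @ ws)) r \<beta>) q r) \<alpha> q)"
proof -
  have "path_sum m (Pre @ Mid @ Suf) g \<alpha> \<beta> = (\<Sum>q<m. path_sum m Pre (\<lambda>ys. path_sum m (Mid @ Suf) (\<lambda>zs. g (ys @ zs)) q \<beta>) \<alpha> q)"
    by (rule path_sum_append[OF a])
  also have "\<dots> = (\<Sum>q<m. path_sum m Pre (\<lambda>ys. \<Sum>r<m. path_sum m Mid (\<lambda>zs. path_sum m Suf (\<lambda>ws. g (ys @ zs @ ws)) r \<beta>) q r) \<alpha> q)"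
  proof (intro sum.cong refl)
    fix q assume "q \<in> {..<m}"
    then have q: "q < m" by simp
    have "(\<lambda>ys. path_sum m (Mid @ Suf) (\<lambda>zs. g (ys @ zs)) q \<beta>) =
      (\<lambda>ys. \<Sum>r<m. path_sum m Mid (\<lambda>zs. path_sum m Suf (\<lambda>ws. g (ys @ zs @ ws)) r \<beta>) q r)"
      by (rule ext) (simp only: path_sum_append[OF q] append_assoc)
    then show "path_sum m Pre (\<lambda>ys. path_sum m (Mid @ Suf) (\<lambda>zs. g (ys @ zs)) q \<beta>) \<alpha> q =
      path_sum m Pre (\<lambda>ys. \<Sum>r<m. path_sum m Mid (\<lambda>zs. path_sum m Suf (\<lambda>ws. g (ys @ zs @ ws)) r \<beta>) q r) \<alpha> q"
      by simp
  qed
  also have "\<dots> = (\<Sum>q<m. \<Sum>r<m. path_sum m Pre (\<lambda>ys. path_sum m Mid (\<lambda>zs. path_sum m Suf (\<lambda>ws. g (ys @ zs @ ws)) r \<beta>) q r) \<alpha> q)"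
    by (simp only: path_sum_sum)
  finally show ?thesis .
qed

lemma sum_path_sum_diff:
  fixes G1 G2 G3 :: "'m::zero fmat list \<Rightarrow> nat \<Rightarrow> 'v::ab_group_add"
  assumes Pre: "is_block_list s Pre"
    and G: "\<And>ys q. is_mat_list s ys \<Longrightarrow> q < m \<Longrightarrow> G1 ys q - G2 ys q = G3 ys q"
  shows "(\<Sum>q<m. path_sum m Pre (\<lambda>ys. G1 ys q) \<alpha> q) - (\<Sum>q<m. path_sum m Pre (\<lambda>ys. G2 ys q) \<alpha> q)
       = (\<Sum>q<m. path_sum m Pre (\<lambda>ys. G3 ys q) \<alpha> q)"
  unfolding sum_subtractf[symmetric] path_sum_diff[symmetric]
  by (intro sum.cong refl path_sum_cong[OF Pre]) (simp add: G)

lemma path_sum_infix_diff: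
  fixes g :: "'m::zero fmat list \<Rightarrow> 'v::ab_group_add"
  assumes Pre: "is_block_list s Pre" and a: "\<alpha> < m"
    and M_diff: "\<And>ys q r. is_mat_list s ys \<Longrightarrow> q < m \<Longrightarrow> r < m \<Longrightarrow>
       path_sum m M1 (\<lambda>zs. path_sum m Suf (\<lambda>ws. g (ys @ zs @ ws)) r \<beta>) q r
     - path_sum m M2 (\<lambda>zs. path_sum m Suf (\<lambda>ws. g (ys @ zs @ ws)) r \<beta>) q r
     = path_sum m M3 (\<lambda>zs. path_sum m Suf (\<lambda>ws. g (ys @ zs @ ws)) r \<beta>) q r"
  shows "path_sum m (Pre @ M1 @ Suf) g \<alpha> \<beta> - path_sum m (Pre @ M2 @ Suf) g \<alpha> \<beta> = path_sum m (Pre @ M3 @ Suf) g \<alpha> \<beta>"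
proof -
  have "(\<Sum>q<m. path_sum m Pre (\<lambda>ys. \<Sum>r<m. path_sum m M1 (\<lambda>zs. path_sum m Suf (\<lambda>ws. g (ys @ zs @ ws)) r \<beta>) q r) \<alpha> q)
      - (\<Sum>q<m. path_sum m Pre (\<lambda>ys. \<Sum>r<m. path_sum m M2 (\<lambda>zs. path_sum m Suf (\<lambda>ws. g (ys @ zs @ ws)) r \<beta>) q r) \<alpha> q)
      = (\<Sum>q<m. path_sum m Pre (\<lambda>ys. \<Sum>r<m. path_sum m M3 (\<lambda>zs. path_sum m Suf (\<lambda>ws. g (ys @ zs @ ws)) r \<beta>) q r) \<alpha> q)"
    by (rule sum_path_sum_diff[OF Pre]) (simp add: sum_subtractf[symmetric] M_diff)
  then show ?thesis
    by (simp only: path_sum_append3[OF a] path_sum_sum)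
qed

locale nc_series_setting =
  fixes scM :: "'r::comm_ring_1 \<Rightarrow> 'm::ab_group_add \<Rightarrow> 'm" and scN :: "'r \<Rightarrow> 'n::ab_group_add \<Rightarrow> 'n"
    and s :: nat and Y :: "'m fmat" and f :: "'m fmat list \<Rightarrow> 'n fmat"
  assumes modM: "module scM" and modN: "module scN" and s_pos: "0 < s" and Y_mat: "is_mat s Y"
    and f_mat: "\<And>Zs. is_mat_list s Zs \<Longrightarrow> is_mat s (f Zs)"
    and f_multilinear: "multilinear scM (msc scN) s f"

locale nc_series_intertwining = nc_series_setting +
  assumes f_0: "\<And>T. msub (lmul scN s T (f [])) (rmul scN s (f []) T) = f [msub (lmul scM s T Y) (rmul scM s Y T)]"
    and f_first: "\<And>T Z Zs. is_mat s Z \<Longrightarrow> is_mat_list s Zs \<Longrightarrow>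
        msub (lmul scN s T (f (Z # Zs))) (f (lmul scM s T Z # Zs)) = f (msub (lmul scM s T Y) (rmul scM s Y T) # Z # Zs)"
    and f_mid: "\<And>T As A B Bs. is_mat_list s As \<Longrightarrow> is_mat_list s Bs \<Longrightarrow> is_mat s A \<Longrightarrow> is_mat s B \<Longrightarrow>
        msub (f (As @ [rmul scM s A T, B] @ Bs)) (f (As @ [A, lmul scM s T B] @ Bs))
         = f (As @ [A, msub (lmul scM s T Y) (rmul scM s Y T), B] @ Bs)"
    and f_last: "\<And>T Zs Z. is_mat_list s Zs \<Longrightarrow> is_mat s Z \<Longrightarrow>
        msub (f (Zs @ [rmul scM s Z T])) (rmul scN s (f (Zs @ [Z])) T) = f (Zs @ [Z, msub (lmul scM s T Y) (rmul scM s Y T)])"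

context nc_series_intertwining
begin

lemma f_first_path_sum:
  assumes Suf: "is_block_list s Suf" and Z: "is_mat s Z"
  shows "lmul scN s T (path_sum M Suf (\<lambda>ws. f (Z # ws)) q \<beta>) - path_sum M Suf (\<lambda>ws. f (lmul scM s T Z # ws)) q \<beta>
       = path_sum M Suf (\<lambda>ws. f (msub (lmul scM s T Y) (rmul scM s Y T) # Z # ws)) q \<beta>"
proof -
  have lmul_path_sum: "lmul scN s T (path_sum M Suf g q \<beta>) = path_sum M Suf (\<lambda>ws. lmul scN s T (g ws)) q \<beta>" for g
    by (rule path_sum_additive[where \<Phi> = "lmul scN s T"]) (simp_all add: module.lmul_add[OF modN] module.lmul_zero[OF modN])
  show ?thesis
    unfolding lmul_path_sum path_sum_diff[symmetric]
    by (rule path_sum_cong[OF Suf]) (use f_first[OF Z] in \<open>simp add: msub_eq\<close>)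
qed

lemma f_mid_path_sum:
  assumes "is_mat_list s ys" and Suf: "is_block_list s Suf" and "is_mat s A" "is_mat s B"
  shows "path_sum M Suf (\<lambda>ws. f (ys @ [rmul scM s A T, B] @ ws)) r \<beta>
       - path_sum M Suf (\<lambda>ws. f (ys @ [A, lmul scM s T B] @ ws)) r \<beta>
       = path_sum M Suf (\<lambda>ws. f (ys @ [A, msub (lmul scM s T Y) (rmul scM s Y T), B] @ ws)) r \<beta>"
  unfolding path_sum_diff[symmetric]
  by (rule path_sum_cong[OF Suf]) (use f_mid[OF assms(1) _ assms(3,4)] in \<open>simp add: msub_eq\<close>)

end

locale nc_similarity = nc_series_intertwining scM scN s Y f
  for scM :: "'r::comm_ring_1 \<Rightarrow> 'm::ab_group_add \<Rightarrow> 'm" and scN :: "'r \<Rightarrow> 'n::ab_group_add \<Rightarrow> 'n"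
    and s Y f +
  fixes m :: nat and S :: "'r fmat" and W W' :: "'m fmat" and L L' :: nat
  assumes W_nilp: "odot_zero scM s m W L" and W'_nilp: "odot_zero scM s m W' L'"
    and W_intertwine: "rmul scM (s * m) W' S - lmul scM (s * m) S W =
        lmul scM (s * m) S (blockdiag s m Y) - rmul scM (s * m) (blockdiag s m Y) S"
begin

definition "S_blk \<alpha> \<beta> = block s S \<alpha> \<beta>"
definition "W_blk = block s W"
definition "W'_blk = block s W'"
definition "W'S_blk = block s (rmul scM (s * m) W' S)"
definition "SW_blk = block s (lmul scM (s * m) S W)"
definition "C_blk = block s (lmul scM (s * m) S (blockdiag s m Y) - rmul scM (s * m) (blockdiag s m Y) S)"
definition "Y_comm \<alpha> \<beta> = msub (lmul scM s (S_blk \<alpha> \<beta>) Y) (rmul scM s Y (S_blk \<alpha> \<beta>))"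

text \<open>The \<open>p\<close>-th summand of the telescoping sum for the degree \<open>l\<close> terms: \<open>lhs_term l p\<close> is the word
  \<open>W'\<^bsup>p-1\<^esup> (W'S) W\<^bsup>l-p\<^esup>\<close> (for \<open>p = 0\<close>: \<open>S\<close> times the degree \<open>l\<close> term of \<open>f(X)\<close>), and \<open>rhs_term l p\<close> is
  \<open>W'\<^bsup>p\<^esup> (SW) W\<^bsup>l-p-1\<^esup>\<close> (for \<open>p = l\<close>: the degree \<open>l\<close> term of \<open>f(X')\<close> times \<open>S\<close>).\<close>

definition "term_blk l \<alpha> \<beta> = path_sum m (replicate l W_blk) f \<alpha> \<beta>"
definition "term_blk' l \<alpha> \<beta> = path_sum m (replicate l W'_blk) f \<alpha> \<beta>"
definition "lhs_term l p \<alpha> \<beta> = (if p = 0 then (\<Sum>\<gamma><m. lmul scN s (S_blk \<alpha> \<gamma>) (term_blk l \<gamma> \<beta>))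
    else path_sum m (replicate (p - 1) W'_blk @ [W'S_blk] @ replicate (l - p) W_blk) f \<alpha> \<beta>)"
definition "rhs_term l p \<alpha> \<beta> = (if p = l then (\<Sum>\<gamma><m. rmul scN s (term_blk' l \<alpha> \<gamma>) (S_blk \<gamma> \<beta>))
    else path_sum m (replicate p W'_blk @ [SW_blk] @ replicate (l - p - 1) W_blk) f \<alpha> \<beta>)"
definition "comm_term l q \<alpha> \<beta> = path_sum m (replicate (q - 1) W'_blk @ [C_blk] @ replicate (l - q) W_blk) f \<alpha> \<beta>"

lemma module_msc_N: "module (msc scN)" by (rule module_msc[OF modN])

lemma is_mat_blocks[simp]: "is_mat s (W_blk a b)" "is_mat s (W'_blk a b)" "is_mat s (W'S_blk a b)" "is_mat s (SW_blk a b)" "is_mat s (C_blk a b)"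
  by (simp_all add: W_blk_def W'_blk_def W'S_blk_def SW_blk_def C_blk_def)

lemma W'S_blk_eq: "\<alpha> < m \<Longrightarrow> \<beta> < m \<Longrightarrow> W'S_blk \<alpha> \<beta> = (\<Sum>\<gamma><m. rmul scM s (W'_blk \<alpha> \<gamma>) (S_blk \<gamma> \<beta>))"
  unfolding W'S_blk_def W'_blk_def S_blk_def by (rule module.block_rmul[OF modM])

lemma SW_blk_eq: "\<alpha> < m \<Longrightarrow> \<beta> < m \<Longrightarrow> SW_blk \<alpha> \<beta> = (\<Sum>\<gamma><m. lmul scM s (S_blk \<alpha> \<gamma>) (W_blk \<gamma> \<beta>))"
  unfolding SW_blk_def W_blk_def S_blk_def by (rule module.block_lmul[OF modM])

lemma C_blk_Y_comm: assumes "\<alpha> < m" "\<beta> < m" shows "C_blk \<alpha> \<beta> = Y_comm \<alpha> \<beta>"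
proof -
  have "block s (lmul scM (s * m) S (blockdiag s m Y)) \<alpha> \<beta> = (\<Sum>\<gamma><m. lmul scM s (S_blk \<alpha> \<gamma>) (if \<gamma> = \<beta> then Y else 0))"
    unfolding module.block_lmul[OF modM assms] S_blk_def
    by (intro sum.cong refl) (simp add: block_blockdiag assms Y_mat)
  also have "\<dots> = (\<Sum>\<gamma><m. if \<gamma> = \<beta> then lmul scM s (S_blk \<alpha> \<gamma>) Y else 0)"
    by (intro sum.cong refl) (simp add: module.lmul_zero[OF modM])
  also have "\<dots> = lmul scM s (S_blk \<alpha> \<beta>) Y" using assms by simp
  finally have 1: "block s (lmul scM (s * m) S (blockdiag s m Y)) \<alpha> \<beta> = lmul scM s (S_blk \<alpha> \<beta>) Y" .
  have "block s (rmul scM (s * m) (blockdiag s m Y) S) \<alpha> \<beta> = (\<Sum>\<gamma><m. rmul scM s (if \<alpha> = \<gamma> then Y else 0) (S_blk \<gamma> \<beta>))"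
    unfolding module.block_rmul[OF modM assms] S_blk_def
    by (intro sum.cong refl) (simp add: block_blockdiag assms Y_mat)
  also have "\<dots> = (\<Sum>\<gamma><m. if \<alpha> = \<gamma> then rmul scM s Y (S_blk \<gamma> \<beta>) else 0)"
    by (intro sum.cong refl) (simp add: module.rmul_zero[OF modM])
  also have "\<dots> = rmul scM s Y (S_blk \<alpha> \<beta>)" using assms by simp
  finally have 2: "block s (rmul scM (s * m) (blockdiag s m Y) S) \<alpha> \<beta> = rmul scM s Y (S_blk \<alpha> \<beta>)" .
  show ?thesis unfolding C_blk_def Y_comm_def block_diff 1 2 msub_eq ..
qed

lemma C_blk_eq_diff: "C_blk a b = W'S_blk a b - SW_blk a b"
  using arg_cong[OF W_intertwine, of "\<lambda>M. block s M a b"] unfolding C_blk_def W'S_blk_def SW_blk_def block_diff by simp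

lemma multilinear_infix: "is_mat_list s ys \<Longrightarrow> is_block_list s Suf \<Longrightarrow> multilinear scM (msc scN) s (\<lambda>zs. path_sum m Suf (\<lambda>ws. f (ys @ zs @ ws)) r \<beta>)"
  using multilinear_path_sum[OF module_msc_N multilinear_fix_prefix[OF f_multilinear], of ys Suf m r \<beta>] by simp

lemma path_sum_commutator_slot:
  assumes Pre: "is_block_list s Pre" and Suf: "is_block_list s Suf" and a: "\<alpha> < m"
  shows "path_sum m (Pre @ [W'S_blk] @ Suf) f \<alpha> \<beta> - path_sum m (Pre @ [SW_blk] @ Suf) f \<alpha> \<beta>
       = path_sum m (Pre @ [C_blk] @ Suf) f \<alpha> \<beta>"
proof (rule path_sum_infix_diff[OF Pre a])
  fix ys :: "'m fmat list" and q r assume ys: "is_mat_list s ys" and r: "r < m"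
  show "path_sum m [W'S_blk] (\<lambda>zs. path_sum m Suf (\<lambda>ws. f (ys @ zs @ ws)) r \<beta>) q r
      - path_sum m [SW_blk] (\<lambda>zs. path_sum m Suf (\<lambda>ws. f (ys @ zs @ ws)) r \<beta>) q r
      = path_sum m [C_blk] (\<lambda>zs. path_sum m Suf (\<lambda>ws. f (ys @ zs @ ws)) r \<beta>) q r"
    unfolding path_sum_1[OF r] C_blk_eq_diff
    using multilinear_diff_slot[OF multilinear_infix[OF ys Suf], of "[]" "[]" "W'S_blk q r" "SW_blk q r"] by simp
qed

lemma intertwine_mid:
  assumes Pre: "is_block_list s Pre" and Suf: "is_block_list s Suf" and a: "\<alpha> < m"
  shows "path_sum m (Pre @ [W'S_blk, W_blk] @ Suf) f \<alpha> \<beta> - path_sum m (Pre @ [W'_blk, SW_blk] @ Suf) f \<alpha> \<beta>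
     = path_sum m (Pre @ [W'_blk, C_blk, W_blk] @ Suf) f \<alpha> \<beta>"
proof (rule path_sum_infix_diff[OF Pre a])
  fix ys :: "'m fmat list" and q r assume ys: "is_mat_list s ys" and q: "q < m" and r: "r < m"
  define H where "H zs = path_sum m Suf (\<lambda>ws. f (ys @ zs @ ws)) r \<beta>" for zs
  have ml: "multilinear scM (msc scN) s H"
    unfolding H_def[abs_def] by (rule multilinear_infix[OF ys Suf])
  have Hmid: "H [rmul scM s A T, B] - H [A, lmul scM s T B] = H [A, msub (lmul scM s T Y) (rmul scM s Y T), B]"
    if "is_mat s A" "is_mat s B" for A B T
    unfolding H_def using f_mid_path_sum[OF ys Suf that] .
  have 1: "path_sum m [W'S_blk, W_blk] H q r = (\<Sum>k<m. \<Sum>\<gamma><m. H [rmul scM s (W'_blk q \<gamma>) (S_blk \<gamma> k), W_blk k r])"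
    unfolding path_sum_2[OF r]
  proof (intro sum.cong refl)
    fix k assume "k \<in> {..<m}"
    then show "H [W'S_blk q k, W_blk k r] = (\<Sum>\<gamma><m. H [rmul scM s (W'_blk q \<gamma>) (S_blk \<gamma> k), W_blk k r])"
      using multilinear_sum_slot[OF ml, of "[]" "[W_blk k r]" "{..<m}" "\<lambda>\<gamma>. rmul scM s (W'_blk q \<gamma>) (S_blk \<gamma> k)"]
        W'S_blk_eq[OF q, of k] by (simp add: module.is_mat_rmul[OF modM])
  qed
  have 2: "path_sum m [W'_blk, SW_blk] H q r = (\<Sum>\<gamma><m. \<Sum>k<m. H [W'_blk q \<gamma>, lmul scM s (S_blk \<gamma> k) (W_blk k r)])"
    unfolding path_sum_2[OF r]
  proof (intro sum.cong refl)
    fix \<gamma> assume "\<gamma> \<in> {..<m}"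
    then show "H [W'_blk q \<gamma>, SW_blk \<gamma> r] = (\<Sum>k<m. H [W'_blk q \<gamma>, lmul scM s (S_blk \<gamma> k) (W_blk k r)])"
      using multilinear_sum_slot[OF ml, of "[W'_blk q \<gamma>]" "[]" "{..<m}" "\<lambda>k. lmul scM s (S_blk \<gamma> k) (W_blk k r)"]
        SW_blk_eq[of \<gamma> r] r by (simp add: module.is_mat_lmul[OF modM])
  qed
  have "path_sum m [W'_blk, C_blk, W_blk] H q r = (\<Sum>\<gamma><m. \<Sum>k<m.
      H [rmul scM s (W'_blk q \<gamma>) (S_blk \<gamma> k), W_blk k r] - H [W'_blk q \<gamma>, lmul scM s (S_blk \<gamma> k) (W_blk k r)])"
    unfolding path_sum_3[OF r] by (intro sum.cong refl) (simp add: C_blk_Y_comm Y_comm_def Hmid)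
  also have "\<dots> = path_sum m [W'S_blk, W_blk] H q r - path_sum m [W'_blk, SW_blk] H q r"
    unfolding 1 2 by (subst sum.swap) (simp only: sum_subtractf)
  finally show "path_sum m [W'S_blk, W_blk] (\<lambda>zs. path_sum m Suf (\<lambda>ws. f (ys @ zs @ ws)) r \<beta>) q r
      - path_sum m [W'_blk, SW_blk] (\<lambda>zs. path_sum m Suf (\<lambda>ws. f (ys @ zs @ ws)) r \<beta>) q r
      = path_sum m [W'_blk, C_blk, W_blk] (\<lambda>zs. path_sum m Suf (\<lambda>ws. f (ys @ zs @ ws)) r \<beta>) q r"
    by (simp only: H_def[abs_def])
qed

lemma intertwine_first:
  assumes Suf: "is_block_list s Suf" and a: "\<alpha> < m" and b: "\<beta> < m"
  shows "(\<Sum>\<gamma><m. lmul scN s (S_blk \<alpha> \<gamma>) (path_sum m ([W_blk] @ Suf) f \<gamma> \<beta>)) - path_sum m ([SW_blk] @ Suf) f \<alpha> \<beta>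
     = path_sum m ([C_blk, W_blk] @ Suf) f \<alpha> \<beta>"
proof -
  define H where "H q zs = path_sum m Suf (\<lambda>ws. f (zs @ ws)) q \<beta>" for q zs
  have ml: "multilinear scM (msc scN) s (H q)" for q
    unfolding H_def[abs_def] using multilinear_infix[OF _ Suf, of "[]" q \<beta>] by simp
  have Hfirst: "lmul scN s T (H q [Z]) - H q [lmul scM s T Z] = H q [msub (lmul scM s T Y) (rmul scM s Y T), Z]"
    if "is_mat s Z" for T q Z
    unfolding H_def using f_first_path_sum[OF Suf that] by simp
  have one_block: "path_sum m ([B] @ Suf) f a' \<beta> = (\<Sum>q<m. H q [B a' q])" if "a' < m" for B a'
    unfolding path_sum_append[OF that] H_def by (intro sum.cong refl) (simp add: path_sum_1)
  have "(\<Sum>\<gamma><m. lmul scN s (S_blk \<alpha> \<gamma>) (path_sum m ([W_blk] @ Suf) f \<gamma> \<beta>))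
      = (\<Sum>\<gamma><m. \<Sum>q<m. lmul scN s (S_blk \<alpha> \<gamma>) (H q [W_blk \<gamma> q]))"
    by (intro sum.cong refl) (simp add: one_block module.lmul_sum[OF modN] H_def)
  moreover have "path_sum m ([SW_blk] @ Suf) f \<alpha> \<beta> = (\<Sum>q<m. \<Sum>\<gamma><m. H q [lmul scM s (S_blk \<alpha> \<gamma>) (W_blk \<gamma> q)])"
    unfolding one_block[OF a]
  proof (intro sum.cong refl)
    fix q assume q: "q \<in> {..<m}"
    show "H q [SW_blk \<alpha> q] = (\<Sum>\<gamma><m. H q [lmul scM s (S_blk \<alpha> \<gamma>) (W_blk \<gamma> q)])"
      using multilinear_sum_slot[OF ml, of "[]" "[]" "{..<m}" "\<lambda>\<gamma>. lmul scM s (S_blk \<alpha> \<gamma>) (W_blk \<gamma> q)" q]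
        SW_blk_eq[OF a, of q] q by (simp add: module.is_mat_lmul[OF modM])
  qed
  moreover have "path_sum m ([C_blk, W_blk] @ Suf) f \<alpha> \<beta> = (\<Sum>q<m. \<Sum>\<gamma><m.
      lmul scN s (S_blk \<alpha> \<gamma>) (H q [W_blk \<gamma> q]) - H q [lmul scM s (S_blk \<alpha> \<gamma>) (W_blk \<gamma> q)])"
    unfolding path_sum_append[OF a] using a
    by (intro sum.cong refl) (simp add: H_def[symmetric] path_sum_2 C_blk_Y_comm Y_comm_def Hfirst)
  ultimately show ?thesis by (simp only:) (subst sum.swap, simp only: sum_subtractf)
qed

lemma intertwine_last:
  assumes Pre: "is_block_list s Pre" and a: "\<alpha> < m" and b: "\<beta> < m"
  shows "path_sum m (Pre @ [W'S_blk]) f \<alpha> \<beta> - (\<Sum>\<gamma><m. rmul scN s (path_sum m (Pre @ [W'_blk]) f \<alpha> \<gamma>) (S_blk \<gamma> \<beta>))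
     = path_sum m (Pre @ [W'_blk, C_blk]) f \<alpha> \<beta>"
proof -
  have rmul_path_sum: "rmul scN s (path_sum m Pre g \<alpha> q) T = path_sum m Pre (\<lambda>ys. rmul scN s (g ys) T) \<alpha> q" for g q T
    by (rule path_sum_additive[where \<Phi> = "\<lambda>x. rmul scN s x T"])
       (simp_all add: module.rmul_add[OF modN] module.rmul_zero[OF modN])
  have "(\<Sum>\<gamma><m. rmul scN s (path_sum m (Pre @ [W'_blk]) f \<alpha> \<gamma>) (S_blk \<gamma> \<beta>))
      = (\<Sum>\<gamma><m. \<Sum>q<m. path_sum m Pre (\<lambda>ys. rmul scN s (f (ys @ [W'_blk q \<gamma>])) (S_blk \<gamma> \<beta>)) \<alpha> q)"
    unfolding path_sum_append[OF a]
    by (intro sum.cong refl) (simp add: path_sum_1 module.rmul_sum[OF modN] rmul_path_sum)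
  also have "\<dots> = (\<Sum>q<m. path_sum m Pre (\<lambda>ys. \<Sum>\<gamma><m. rmul scN s (f (ys @ [W'_blk q \<gamma>])) (S_blk \<gamma> \<beta>)) \<alpha> q)"
    by (subst sum.swap) (simp only: path_sum_sum)
  finally have rmul_term: "(\<Sum>\<gamma><m. rmul scN s (path_sum m (Pre @ [W'_blk]) f \<alpha> \<gamma>) (S_blk \<gamma> \<beta>)) = \<dots>" .
  have last_slot: "path_sum m [W'S_blk] (\<lambda>zs. f (ys @ zs)) q \<beta>
      - (\<Sum>\<gamma><m. rmul scN s (f (ys @ [W'_blk q \<gamma>])) (S_blk \<gamma> \<beta>))
      = path_sum m [W'_blk, C_blk] (\<lambda>zs. f (ys @ zs)) q \<beta>"
    if ys: "is_mat_list s ys" and q: "q < m" for ys q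
  proof -
    have "path_sum m [W'S_blk] (\<lambda>zs. f (ys @ zs)) q \<beta> = (\<Sum>\<gamma><m. f (ys @ [rmul scM s (W'_blk q \<gamma>) (S_blk \<gamma> \<beta>)]))"
      using multilinear_sum_slot[OF f_multilinear ys, of "[]" "{..<m}" "\<lambda>\<gamma>. rmul scM s (W'_blk q \<gamma>) (S_blk \<gamma> \<beta>)"]
        W'S_blk_eq[OF q b] b by (simp add: path_sum_1 module.is_mat_rmul[OF modM])
    moreover have "f (ys @ [W'_blk q \<gamma>, C_blk \<gamma> \<beta>])
        = f (ys @ [rmul scM s (W'_blk q \<gamma>) (S_blk \<gamma> \<beta>)]) - rmul scN s (f (ys @ [W'_blk q \<gamma>])) (S_blk \<gamma> \<beta>)"
      if "\<gamma> < m" for \<gamma>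
      using f_last[OF ys, of "W'_blk q \<gamma>" "S_blk \<gamma> \<beta>"] that b by (simp add: C_blk_Y_comm Y_comm_def msub_eq)
    ultimately show ?thesis
      using b by (simp add: path_sum_2 sum_subtractf)
  qed
  show ?thesis
    unfolding rmul_term unfolding path_sum_append[OF a]
    by (rule sum_path_sum_diff[OF Pre]) (rule last_slot)
qed

lemma intertwine_empty:
  assumes a: "\<alpha> < m" and b: "\<beta> < m"
  shows "(\<Sum>\<gamma><m. lmul scN s (S_blk \<alpha> \<gamma>) (term_blk 0 \<gamma> \<beta>)) - (\<Sum>\<gamma><m. rmul scN s (term_blk' 0 \<alpha> \<gamma>) (S_blk \<gamma> \<beta>))
     = comm_term 1 1 \<alpha> \<beta>"
proof -
  have "(\<Sum>\<gamma><m. lmul scN s (S_blk \<alpha> \<gamma>) (term_blk 0 \<gamma> \<beta>)) = (\<Sum>\<gamma><m. if \<gamma> = \<beta> then lmul scN s (S_blk \<alpha> \<gamma>) (f []) else 0)"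
    by (intro sum.cong refl) (simp add: term_blk_def module.lmul_zero[OF modN])
  also have "\<dots> = lmul scN s (S_blk \<alpha> \<beta>) (f [])" using b by simp
  finally have 1: "(\<Sum>\<gamma><m. lmul scN s (S_blk \<alpha> \<gamma>) (term_blk 0 \<gamma> \<beta>)) = lmul scN s (S_blk \<alpha> \<beta>) (f [])" .
  have "(\<Sum>\<gamma><m. rmul scN s (term_blk' 0 \<alpha> \<gamma>) (S_blk \<gamma> \<beta>)) = (\<Sum>\<gamma><m. if \<alpha> = \<gamma> then rmul scN s (f []) (S_blk \<gamma> \<beta>) else 0)"
    by (intro sum.cong refl) (simp add: term_blk'_def module.rmul_zero[OF modN])
  also have "\<dots> = rmul scN s (f []) (S_blk \<alpha> \<beta>)" using a by simp
  finally have 2: "(\<Sum>\<gamma><m. rmul scN s (term_blk' 0 \<alpha> \<gamma>) (S_blk \<gamma> \<beta>)) = rmul scN s (f []) (S_blk \<alpha> \<beta>)" .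
  have 3: "comm_term 1 1 \<alpha> \<beta> = f [Y_comm \<alpha> \<beta>]" using a b by (simp add: comm_term_def path_sum_1 C_blk_Y_comm)
  show ?thesis unfolding 1 2 3 Y_comm_def using f_0[of "S_blk \<alpha> \<beta>"] by (simp add: msub_eq)
qed

lemma lhs_minus_rhs_first:
  assumes a: "\<alpha> < m" and b: "\<beta> < m"
  shows "lhs_term (Suc l) 0 \<alpha> \<beta> - rhs_term (Suc l) 0 \<alpha> \<beta> = comm_term (Suc (Suc l)) 1 \<alpha> \<beta>"
proof -
  have "term_blk (Suc l) \<gamma> \<beta> = path_sum m ([W_blk] @ replicate l W_blk) f \<gamma> \<beta>" for \<gamma>
    by (simp add: term_blk_def)
  moreover have "rhs_term (Suc l) 0 \<alpha> \<beta> = path_sum m ([SW_blk] @ replicate l W_blk) f \<alpha> \<beta>"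
    by (simp add: rhs_term_def)
  moreover have "comm_term (Suc (Suc l)) 1 \<alpha> \<beta> = path_sum m ([C_blk, W_blk] @ replicate l W_blk) f \<alpha> \<beta>"
    by (simp add: comm_term_def)
  ultimately show ?thesis
    using intertwine_first[OF _ a b, of "replicate l W_blk"]
    by (simp add: lhs_term_def del: append_Cons append_Nil)
qed

lemma lhs_minus_rhs_last:
  assumes a: "\<alpha> < m" and b: "\<beta> < m"
  shows "lhs_term (Suc l) (Suc l) \<alpha> \<beta> - rhs_term (Suc l) (Suc l) \<alpha> \<beta> = comm_term (Suc (Suc l)) (Suc (Suc l)) \<alpha> \<beta>"
proof -
  have "term_blk' (Suc l) \<alpha> \<gamma> = path_sum m (replicate l W'_blk @ [W'_blk]) f \<alpha> \<gamma>" for \<gamma>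
    by (simp add: term_blk'_def replicate_append_same)
  moreover have "W'_blk # replicate l W'_blk @ [C_blk] = replicate l W'_blk @ [W'_blk, C_blk]"
    by (induction l) auto
  ultimately show ?thesis
    using intertwine_last[OF _ a b, of "replicate l W'_blk"]
    by (simp add: lhs_term_def rhs_term_def comm_term_def del: path_sum.simps)
qed

lemma lhs_minus_rhs_mid:
  assumes p: "Suc p < l" and a: "\<alpha> < m"
  shows "lhs_term l (Suc p) \<alpha> \<beta> - rhs_term l (Suc p) \<alpha> \<beta> = comm_term (Suc l) (Suc (Suc p)) \<alpha> \<beta>"
proof -
  define Suf where "Suf = replicate (l - Suc p - 1) W_blk"
  have W_blks: "replicate (l - Suc p) W_blk = W_blk # Suf"
    using p unfolding Suf_def by (metis Suc_diff_Suc diff_Suc_1 replicate_Suc zero_less_diff)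
  have "lhs_term l (Suc p) \<alpha> \<beta> = path_sum m (replicate p W'_blk @ [W'S_blk, W_blk] @ Suf) f \<alpha> \<beta>"
    by (simp add: lhs_term_def W_blks)
  moreover have "rhs_term l (Suc p) \<alpha> \<beta> = path_sum m (replicate p W'_blk @ [W'_blk, SW_blk] @ Suf) f \<alpha> \<beta>"
    using p by (simp add: rhs_term_def Suf_def replicate_append_same[where i = p and x = W'_blk, symmetric]
        del: replicate_append_same)
  moreover have "comm_term (Suc l) (Suc (Suc p)) \<alpha> \<beta> = path_sum m (replicate p W'_blk @ [W'_blk, C_blk, W_blk] @ Suf) f \<alpha> \<beta>"
    by (simp add: comm_term_def W_blks replicate_append_same[where i = p and x = W'_blk, symmetric]
        del: replicate_append_same)
  ultimately show ?thesis
    using intertwine_mid[OF _ _ a, of "replicate p W'_blk" Suf] by (simp add: Suf_def)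
qed

lemma lhs_minus_rhs:
  assumes pl: "p \<le> l" and a: "\<alpha> < m" and b: "\<beta> < m"
  shows "lhs_term l p \<alpha> \<beta> - rhs_term l p \<alpha> \<beta> = comm_term (Suc l) (Suc p) \<alpha> \<beta>"
proof (cases l)
  case 0
  then show ?thesis using pl intertwine_empty[OF a b] by (simp add: lhs_term_def rhs_term_def)
next
  case (Suc l')
  consider "p = 0" | "p = l" | p' where "p = Suc p'" "Suc p' < l"
    using pl by (cases p) force+
  then show ?thesis
    by cases (use lhs_minus_rhs_first[OF a b] lhs_minus_rhs_last[OF a b] lhs_minus_rhs_mid[OF _ a] Suc in auto)
qed

lemma comm_term_split:
  assumes q: "q \<le> l" and a: "\<alpha> < m"
  shows "comm_term (Suc l) (Suc q) \<alpha> \<beta> = lhs_term (Suc l) (Suc q) \<alpha> \<beta> - rhs_term (Suc l) q \<alpha> \<beta>"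
proof -
  have e1: "lhs_term (Suc l) (Suc q) \<alpha> \<beta> = path_sum m (replicate q W'_blk @ [W'S_blk] @ replicate (l - q) W_blk) f \<alpha> \<beta>"
    by (simp add: lhs_term_def)
  have e2: "rhs_term (Suc l) q \<alpha> \<beta> = path_sum m (replicate q W'_blk @ [SW_blk] @ replicate (l - q) W_blk) f \<alpha> \<beta>"
    using q by (simp add: rhs_term_def)
  have e3: "comm_term (Suc l) (Suc q) \<alpha> \<beta> = path_sum m (replicate q W'_blk @ [C_blk] @ replicate (l - q) W_blk) f \<alpha> \<beta>"
    by (simp add: comm_term_def)
  show ?thesis unfolding e1 e2 e3 by (rule path_sum_commutator_slot[OF _ _ a, symmetric]) simp_all
qed

definition "lhs_sum l \<alpha> \<beta> = (\<Sum>p\<le>l. lhs_term l p \<alpha> \<beta>)"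
definition "rhs_sum l \<alpha> \<beta> = (\<Sum>p\<le>l. rhs_term l p \<alpha> \<beta>)"

lemma telescope_step:
  assumes a: "\<alpha> < m" and b: "\<beta> < m"
  shows "lhs_term (Suc l) 0 \<alpha> \<beta> - rhs_term (Suc l) (Suc l) \<alpha> \<beta>
       = (lhs_sum (Suc l) \<alpha> \<beta> - rhs_sum (Suc l) \<alpha> \<beta>) - (lhs_sum l \<alpha> \<beta> - rhs_sum l \<alpha> \<beta>)"
proof -
  have "lhs_sum l \<alpha> \<beta> - rhs_sum l \<alpha> \<beta> = (\<Sum>p\<le>l. lhs_term l p \<alpha> \<beta> - rhs_term l p \<alpha> \<beta>)"
    by (simp add: lhs_sum_def rhs_sum_def sum_subtractf)
  also have "\<dots> = (\<Sum>p\<le>l. lhs_term (Suc l) (Suc p) \<alpha> \<beta> - rhs_term (Suc l) p \<alpha> \<beta>)"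
    by (intro sum.cong refl) (simp add: lhs_minus_rhs[OF _ a b] comm_term_split[OF _ a])
  also have "\<dots> = (\<Sum>p\<le>l. lhs_term (Suc l) (Suc p) \<alpha> \<beta>) - (\<Sum>p\<le>l. rhs_term (Suc l) p \<alpha> \<beta>)"
    by (simp add: sum_subtractf)
  also have "\<dots> = (lhs_sum (Suc l) \<alpha> \<beta> - lhs_term (Suc l) 0 \<alpha> \<beta>) - (rhs_sum (Suc l) \<alpha> \<beta> - rhs_term (Suc l) (Suc l) \<alpha> \<beta>)"
  proof -
    have 1: "lhs_sum (Suc l) \<alpha> \<beta> = lhs_term (Suc l) 0 \<alpha> \<beta> + (\<Sum>p\<le>l. lhs_term (Suc l) (Suc p) \<alpha> \<beta>)"
      by (simp only: lhs_sum_def sum.atMost_Suc_shift)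
    have 2: "rhs_sum (Suc l) \<alpha> \<beta> = (\<Sum>p\<le>l. rhs_term (Suc l) p \<alpha> \<beta>) + rhs_term (Suc l) (Suc l) \<alpha> \<beta>"
      by (simp only: rhs_sum_def sum.atMost_Suc)
    show ?thesis unfolding 1 2 by (simp only: add_diff_cancel_left' add_diff_cancel)
  qed
  finally show ?thesis by (simp add: algebra_simps)
qed

lemma telescope:
  assumes a: "\<alpha> < m" and b: "\<beta> < m"
  shows "(\<Sum>l\<le>N. lhs_term l 0 \<alpha> \<beta> - rhs_term l l \<alpha> \<beta>) = lhs_sum N \<alpha> \<beta> - rhs_sum N \<alpha> \<beta>"
proof (induction N)
  case 0 then show ?case by (simp add: lhs_sum_def rhs_sum_def)
next
  case (Suc N)
  have "(\<Sum>l\<le>Suc N. lhs_term l 0 \<alpha> \<beta> - rhs_term l l \<alpha> \<beta>)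
      = (\<Sum>l\<le>N. lhs_term l 0 \<alpha> \<beta> - rhs_term l l \<alpha> \<beta>) + (lhs_term (Suc N) 0 \<alpha> \<beta> - rhs_term (Suc N) (Suc N) \<alpha> \<beta>)"
    by (rule sum.atMost_Suc)
  then show ?case
    by (simp only: Suc.IH telescope_step[OF a b] add.commute[of "lhs_sum N \<alpha> \<beta> - rhs_sum N \<alpha> \<beta>"] diff_add_cancel)
qed

lemma path_sum_vanish_W:
  assumes "is_block_list s Pre" "is_block_list s Suf" "L \<le> k" "\<alpha> < m" "\<beta> < m"
  shows "path_sum m (Pre @ replicate k W_blk @ Suf) f \<alpha> \<beta> = 0"
proof -
  have "Pre @ replicate k W_blk @ Suf = Pre @ replicate L (block s W) @ (replicate (k - L) W_blk @ Suf)"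
    using assms(3) by (simp add: W_blk_def replicate_add[symmetric])
  then show ?thesis using path_sum_odot_zero_infix[OF modM module_msc_N W_nilp f_multilinear assms(4,5) assms(1), of "replicate (k - L) W_blk @ Suf"] assms(2)
    by (simp add: W_blk_def)
qed

lemma path_sum_vanish_W':
  assumes "is_block_list s Pre" "is_block_list s Suf" "L' \<le> k" "\<alpha> < m" "\<beta> < m"
  shows "path_sum m (Pre @ replicate k W'_blk @ Suf) f \<alpha> \<beta> = 0"
proof -
  have "Pre @ replicate k W'_blk @ Suf = Pre @ replicate L' (block s W') @ (replicate (k - L') W'_blk @ Suf)"
    using assms(3) by (simp add: W'_blk_def replicate_add[symmetric])
  then show ?thesis using path_sum_odot_zero_infix[OF modM module_msc_N W'_nilp f_multilinear assms(4,5) assms(1), of "replicate (k - L') W'_blk @ Suf"] assms(2)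
    by (simp add: W'_blk_def)
qed

lemma term_blk_vanish: "L \<le> l \<Longrightarrow> \<gamma> < m \<Longrightarrow> \<beta> < m \<Longrightarrow> term_blk l \<gamma> \<beta> = 0"
  using path_sum_vanish_W[of "[]" "[]" l \<gamma> \<beta>] by (simp add: term_blk_def)
lemma term_blk'_vanish: "L' \<le> l \<Longrightarrow> \<gamma> < m \<Longrightarrow> \<beta> < m \<Longrightarrow> term_blk' l \<gamma> \<beta> = 0"
  using path_sum_vanish_W'[of "[]" "[]" l \<gamma> \<beta>] by (simp add: term_blk'_def)

lemma lhs_term_vanish:
  assumes N: "L + L' \<le> N" and p: "p \<le> N" and a: "\<alpha> < m" and b: "\<beta> < m"
  shows "lhs_term N p \<alpha> \<beta> = 0"
proof (cases p)
  case 0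
  then show ?thesis using N b by (simp add: lhs_term_def term_blk_vanish module.lmul_zero[OF modN])
next
  case (Suc p')
  show ?thesis
  proof (cases "L \<le> N - p")
    case True
    then show ?thesis using path_sum_vanish_W[of "replicate p' W'_blk @ [W'S_blk]" "[]" "N - p" \<alpha> \<beta>] a b Suc
      by (simp add: lhs_term_def)
  next
    case False
    then have "L' \<le> p'" using N p Suc by linarith
    then show ?thesis using path_sum_vanish_W'[of "[]" "[W'S_blk] @ replicate (N - p) W_blk" p' \<alpha> \<beta>] a b Suc
      by (simp add: lhs_term_def)
  qed
qed

lemma rhs_term_vanish:
  assumes N: "L + L' \<le> N" and p: "p \<le> N" and a: "\<alpha> < m" and b: "\<beta> < m"
  shows "rhs_term N p \<alpha> \<beta> = 0"
proof (cases "p = N")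
  case True
  then show ?thesis using N a by (simp add: rhs_term_def term_blk'_vanish module.rmul_zero[OF modN])
next
  case False
  show ?thesis
  proof (cases "L \<le> N - p - 1")
    case True
    then show ?thesis using path_sum_vanish_W[of "replicate p W'_blk @ [SW_blk]" "[]" "N - p - 1" \<alpha> \<beta>] a b \<open>p \<noteq> N\<close>
      by (simp add: rhs_term_def)
  next
    case False
    then have "L' \<le> p" using N p \<open>p \<noteq> N\<close> by linarith
    then show ?thesis using path_sum_vanish_W'[of "[]" "[SW_blk] @ replicate (N - p - 1) W_blk" p \<alpha> \<beta>] a b \<open>p \<noteq> N\<close>
      by (simp add: rhs_term_def)
  qed
qed

lemma similarity_blocks:
  assumes N: "L + L' \<le> N" and a: "\<alpha> < m" and b: "\<beta> < m"
  shows "(\<Sum>l\<le>N. \<Sum>\<gamma><m. lmul scN s (S_blk \<alpha> \<gamma>) (term_blk l \<gamma> \<beta>))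
       = (\<Sum>l\<le>N. \<Sum>\<gamma><m. rmul scN s (term_blk' l \<alpha> \<gamma>) (S_blk \<gamma> \<beta>))"
proof -
  have "lhs_sum N \<alpha> \<beta> = 0" unfolding lhs_sum_def by (intro sum.neutral ballI) (use lhs_term_vanish[OF N _ a b] in auto)
  moreover have "rhs_sum N \<alpha> \<beta> = 0" unfolding rhs_sum_def by (intro sum.neutral ballI) (use rhs_term_vanish[OF N _ a b] in auto)
  ultimately have "(\<Sum>l\<le>N. lhs_term l 0 \<alpha> \<beta> - rhs_term l l \<alpha> \<beta>) = 0" using telescope[OF a b, of N] by simp
  then show ?thesis by (simp add: sum_subtractf lhs_term_def rhs_term_def)
qed

lemma block_sum_assemble:
  assumes "\<alpha> < m" "\<gamma> < m"
  shows "block s (\<Sum>l<Suc N. assemble s m (\<lambda>\<alpha> \<beta>. path_sum m (replicate l (block s V)) f \<alpha> \<beta>)) \<alpha> \<gamma>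
     = (\<Sum>l\<le>N. path_sum m (replicate l (block s V)) f \<alpha> \<gamma>)"
  unfolding block_sum lessThan_Suc_atMost
  by (intro sum.cong refl block_assemble_mat assms is_mat_path_sum f_mat) (auto simp: is_block_list_def)

lemma similarity_series:
  assumes N: "L + L' \<le> N"
  shows "rmul scN (s * m) (\<Sum>l<Suc N. assemble s m (\<lambda>\<alpha> \<beta>. path_sum m (replicate l (block s W')) f \<alpha> \<beta>)) S
       = lmul scN (s * m) S (\<Sum>l<Suc N. assemble s m (\<lambda>\<alpha> \<beta>. path_sum m (replicate l (block s W)) f \<alpha> \<beta>))"
proof (rule mat_eq_blocks[of s m])
  show "is_mat (s * m) (rmul scN (s * m) (\<Sum>l<Suc N. assemble s m (\<lambda>\<alpha> \<beta>. path_sum m (replicate l (block s W')) f \<alpha> \<beta>)) S)"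
    by (rule module.is_mat_rmul[OF modN])
  show "is_mat (s * m) (lmul scN (s * m) S (\<Sum>l<Suc N. assemble s m (\<lambda>\<alpha> \<beta>. path_sum m (replicate l (block s W)) f \<alpha> \<beta>)))"
    by (rule module.is_mat_lmul[OF modN])
  fix \<alpha> \<beta> assume a: "\<alpha> < m" and b: "\<beta> < m"
  have "block s (rmul scN (s * m) (\<Sum>l<Suc N. assemble s m (\<lambda>\<alpha> \<beta>. path_sum m (replicate l (block s W')) f \<alpha> \<beta>)) S) \<alpha> \<beta>
     = (\<Sum>\<gamma><m. rmul scN s (\<Sum>l\<le>N. term_blk' l \<alpha> \<gamma>) (S_blk \<gamma> \<beta>))"
    unfolding module.block_rmul[OF modN a b] S_blk_def term_blk'_def W'_blk_def
    by (intro sum.cong refl) (subst block_sum_assemble[OF a], simp_all)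
  also have "\<dots> = (\<Sum>l\<le>N. \<Sum>\<gamma><m. rmul scN s (term_blk' l \<alpha> \<gamma>) (S_blk \<gamma> \<beta>))"
    by (simp only: module.rmul_sum[OF modN]) (rule sum.swap)
  also have "\<dots> = (\<Sum>l\<le>N. \<Sum>\<gamma><m. lmul scN s (S_blk \<alpha> \<gamma>) (term_blk l \<gamma> \<beta>))"
    by (rule similarity_blocks[OF N a b, symmetric])
  also have "\<dots> = (\<Sum>\<gamma><m. lmul scN s (S_blk \<alpha> \<gamma>) (\<Sum>l\<le>N. term_blk l \<gamma> \<beta>))"
    by (simp only: module.lmul_sum[OF modN]) (rule sum.swap)
  also have "\<dots> = block s (lmul scN (s * m) S (\<Sum>l<Suc N. assemble s m (\<lambda>\<alpha> \<beta>. path_sum m (replicate l (block s W)) f \<alpha> \<beta>))) \<alpha> \<beta>"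
    unfolding module.block_lmul[OF modN a b] S_blk_def term_blk_def W_blk_def
    by (intro sum.cong refl) (subst block_sum_assemble[OF _ b], simp_all)
  finally show "block s (rmul scN (s * m) (\<Sum>l<Suc N. assemble s m (\<lambda>\<alpha> \<beta>. path_sum m (replicate l (block s W')) f \<alpha> \<beta>)) S) \<alpha> \<beta>
     = block s (lmul scN (s * m) S (\<Sum>l<Suc N. assemble s m (\<lambda>\<alpha> \<beta>. path_sum m (replicate l (block s W)) f \<alpha> \<beta>))) \<alpha> \<beta>" .
qed

end

context nc_series_setting
begin

lemma nc_series_partial_sum:
  assumes "odot_zero scM s m (msub X (blockdiag s m Y)) L" "L \<le> N"
  shows "finite {l. series_term s Y f (s * m) X l \<noteq> (\<lambda>_ _. 0)}"
    and "nc_series s Y f (s * m) X = (\<Sum>l<N. series_term s Y f (s * m) X l)"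
  using nc_series_eq[of N s Y f "s * m" X] series_term_vanish[OF modM modN f_multilinear assms(1) s_pos]
    assms(2) by auto

lemma Nilp_finite_series:
  "(n, X) \<in> Nilp scM s Y \<Longrightarrow> finite {l. series_term s Y f n X l \<noteq> (\<lambda>_ _. 0)}"
  by (elim NilpE) (auto intro: nc_series_partial_sum)

lemma Nilp_dim_pos: "(n, X) \<in> Nilp scM s Y \<Longrightarrow> 1 \<le> n \<and> is_mat n X"
  using s_pos by (elim NilpE) simp

lemma is_mat_nc_series: "(n, X) \<in> Nilp scM s Y \<Longrightarrow> is_mat n (nc_series s Y f n X)"
proof (elim NilpE)
  fix m L assume n: "n = s * m" and W: "odot_zero scM s m (msub X (blockdiag s m Y)) L"
  show "is_mat n (nc_series s Y f n X)"
    unfolding n nc_series_partial_sum(2)[OF W order.refl]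
    by (intro is_mat_sum) (simp add: series_term_assemble[OF s_pos] is_mat_assemble)
qed

lemma nc_series_dsum:
  assumes X: "(n, X) \<in> Nilp scM s Y" and X': "(n', X') \<in> Nilp scM s Y"
  shows "nc_series s Y f (n + n') (dsum n n' X X') = dsum n n' (nc_series s Y f n X) (nc_series s Y f n' X')"
proof -
  obtain m L1 where m: "n = s * m" "odot_zero scM s m (msub X (blockdiag s m Y)) L1"
    using X by (elim NilpE)
  obtain m' L2 where m': "n' = s * m'" "odot_zero scM s m' (msub X' (blockdiag s m' Y)) L2"
    using X' by (elim NilpE)
  define N where "N = max L1 L2"
  have split: "series_term s Y f (s * m + s * m') (dsum (s * m) (s * m') X X') l =
      dsum (s * m) (s * m') (series_term s Y f (s * m) X l) (series_term s Y f (s * m') X' l)" for l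
    by (rule series_term_dsum[OF s_pos Y_mat f_multilinear f_mat])
  have "nc_series s Y f (s * m + s * m') (dsum (s * m) (s * m') X X') =
      (\<Sum>l<N. series_term s Y f (s * m + s * m') (dsum (s * m) (s * m') X X') l)"
  proof (rule conjunct2[OF nc_series_eq])
    fix l assume "N \<le> l"
    then show "series_term s Y f (s * m + s * m') (dsum (s * m) (s * m') X X') l = 0"
      unfolding split N_def
      using series_term_vanish[OF modM modN f_multilinear m(2) s_pos, of l]
        series_term_vanish[OF modM modN f_multilinear m'(2) s_pos, of l] dsum_0 by simp
  qed
  also have "\<dots> = dsum (s * m) (s * m') (\<Sum>l<N. series_term s Y f (s * m) X l) (\<Sum>l<N. series_term s Y f (s * m') X' l)"
    unfolding split by (rule dsum_sum[symmetric])
  also have "\<dots> = dsum (s * m) (s * m') (nc_series s Y f (s * m) X) (nc_series s Y f (s * m') X')"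
    using nc_series_partial_sum(2)[OF m(2), of N] nc_series_partial_sum(2)[OF m'(2), of N] by (simp add: N_def)
  finally show ?thesis unfolding m(1) m'(1) .
qed

end

context nc_series_intertwining
begin

lemma nc_series_intertwines:
  assumes X: "(s * m, X) \<in> Nilp scM s Y" and X': "(s * m, X') \<in> Nilp scM s Y"
    and X'S: "rmul scM (s * m) X' S = lmul scM (s * m) S X"
  shows "rmul scN (s * m) (nc_series s Y f (s * m) X') S = lmul scN (s * m) S (nc_series s Y f (s * m) X)"
proof -
  obtain L where L: "odot_zero scM s m (msub X (blockdiag s m Y)) L"
    using X s_pos by (elim NilpE) simp
  obtain L' where L': "odot_zero scM s m (msub X' (blockdiag s m Y)) L'"
    using X' s_pos by (elim NilpE) simp
  define W where "W = msub X (blockdiag s m Y)"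
  define W' where "W' = msub X' (blockdiag s m Y)"
  have "rmul scM (s * m) W' S - lmul scM (s * m) S W =
      lmul scM (s * m) S (blockdiag s m Y) - rmul scM (s * m) (blockdiag s m Y) S"
    unfolding W_def W'_def msub_eq module.rmul_diff[OF modM] module.lmul_diff[OF modM] X'S
    by (simp add: algebra_simps)
  then interpret nc_similarity scM scN s Y f m S W W' L L'
    using L L' by unfold_locales (simp_all add: W_def W'_def)
  have series: "nc_series s Y f (s * m) V =
      (\<Sum>l<Suc (L + L'). assemble s m (\<lambda>\<alpha> \<beta>. path_sum m (replicate l (block s (msub V (blockdiag s m Y)))) f \<alpha> \<beta>))"
    if "odot_zero scM s m (msub V (blockdiag s m Y)) K" "K \<le> L + L'" for V K
    using nc_series_partial_sum(2)[OF that(1), of "Suc (L + L')"] that(2)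
    by (simp add: series_term_assemble[OF s_pos])
  show ?thesis
    using similarity_series[OF order.refl] series[OF L] series[OF L']
    by (simp add: W_def W'_def)
qed

lemma nc_series_similarity:
  assumes X: "(n, X) \<in> Nilp scM s Y" and ST: "rmatmul n S T = idmat n" and TS: "rmatmul n T S = idmat n"
    and SXT: "(n, rmul scM n (lmul scM n S X) T) \<in> Nilp scM s Y"
  shows "nc_series s Y f n (rmul scM n (lmul scM n S X) T) = rmul scN n (lmul scN n S (nc_series s Y f n X)) T"
proof -
  define X' where "X' = rmul scM n (lmul scM n S X) T"
  obtain m where n: "n = s * m" using X by (elim NilpE)
  have "rmul scM n X' S = lmul scM n S X"
    unfolding X'_def module.rmul_rmul[OF modM] TS by (rule module.rmul_id[OF modM module.is_mat_lmul[OF modM]])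
  then have main: "rmul scN n (nc_series s Y f n X') S = lmul scN n S (nc_series s Y f n X)"
    using nc_series_intertwines X SXT unfolding n X'_def by blast
  have "nc_series s Y f n X' = rmul scN n (rmul scN n (nc_series s Y f n X') S) T"
    unfolding module.rmul_rmul[OF modN] ST
    by (rule module.rmul_id[OF modN is_mat_nc_series, symmetric]) (use SXT X'_def in simp)
  also have "\<dots> = rmul scN n (lmul scN n S (nc_series s Y f n X)) T" unfolding main ..
  finally show ?thesis unfolding X'_def .
qed

end

theorem theorem5p13:
  fixes scaleM :: "'r::comm_ring_1 \<Rightarrow> 'm::ab_group_add \<Rightarrow> 'm"
    and scaleN :: "'r \<Rightarrow> 'n::ab_group_add \<Rightarrow> 'n"
    and s :: nat and Y :: "'m fmat"
    and f :: "'m fmat list \<Rightarrow> 'n fmat"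
  assumes modM: "is_module scaleM"
    and modN: "is_module scaleN"
    and s_pos: "1 \<le> s"
    and Y_mat: "is_mat s Y"
    and f_mat: "\<And>Zs. \<forall>Z\<in>set Zs. is_mat s Z \<Longrightarrow> is_mat s (f Zs)"
    and f_add: "\<And>As Bs A B. \<forall>Z\<in>set As. is_mat s Z \<Longrightarrow> \<forall>Z\<in>set Bs. is_mat s Z \<Longrightarrow>
                  is_mat s A \<Longrightarrow> is_mat s B \<Longrightarrow>
                  f (As @ [madd A B] @ Bs) = madd (f (As @ [A] @ Bs)) (f (As @ [B] @ Bs))"
    and f_smult: "\<And>As Bs A r. \<forall>Z\<in>set As. is_mat s Z \<Longrightarrow> \<forall>Z\<in>set Bs. is_mat s Z \<Longrightarrow>
                  is_mat s A \<Longrightarrow>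
                  f (As @ [msc scaleM r A] @ Bs) = msc scaleN r (f (As @ [A] @ Bs))"
    and f_0: "\<And>S. msub (lmul scaleN s S (f [])) (rmul scaleN s (f []) S)
                   = f [msub (lmul scaleM s S Y) (rmul scaleM s Y S)]"
    and f_first: "\<And>S Z Zs. is_mat s Z \<Longrightarrow> \<forall>W\<in>set Zs. is_mat s W \<Longrightarrow>
                  msub (lmul scaleN s S (f (Z # Zs))) (f (lmul scaleM s S Z # Zs))
                   = f (msub (lmul scaleM s S Y) (rmul scaleM s Y S) # Z # Zs)"
    and f_mid: "\<And>S As A B Bs. \<forall>W\<in>set As. is_mat s W \<Longrightarrow> \<forall>W\<in>set Bs. is_mat s W \<Longrightarrow>
                  is_mat s A \<Longrightarrow> is_mat s B \<Longrightarrow>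
                  msub (f (As @ [rmul scaleM s A S, B] @ Bs)) (f (As @ [A, lmul scaleM s S B] @ Bs))
                   = f (As @ [A, msub (lmul scaleM s S Y) (rmul scaleM s Y S), B] @ Bs)"
    and f_last: "\<And>S Zs Z. \<forall>W\<in>set Zs. is_mat s W \<Longrightarrow> is_mat s Z \<Longrightarrow>
                  msub (f (Zs @ [rmul scaleM s Z S])) (rmul scaleN s (f (Zs @ [Z])) S)
                   = f (Zs @ [Z, msub (lmul scaleM s S Y) (rmul scaleM s Y S)])"
  shows "(\<forall>n X. (n, X) \<in> Nilp scaleM s Y \<longrightarrow>
            finite {l. series_term s Y f n X l \<noteq> (\<lambda>_ _. 0)}) \<and>
         nc_function scaleM scaleN (Nilp scaleM s Y) (nc_series s Y f)"
proof -
  have modM': "module scaleM" and modN': "module scaleN"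
    using modM modN by (simp_all add: is_module_def)
  interpret F: nc_series_intertwining scaleM scaleN s Y f
    using modM' modN' s_pos Y_mat f_mat f_add f_smult f_0 f_first f_mid f_last
    by (intro nc_series_intertwining.intro nc_series_setting.intro nc_series_intertwining_axioms.intro)
       (auto simp: is_mat_list_def multilinear_def madd_eq)
  show ?thesis
    unfolding nc_function_def
    using F.Nilp_finite_series F.Nilp_dim_pos Nilp_dsum[OF modM' Y_mat] F.is_mat_nc_series
      F.nc_series_dsum F.nc_series_similarity by blast
qed

end
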